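(* Let $(\mathfrak C,\Delta,\varepsilon)$ be an $A$-coring and $(M,\mathfrak m)$ a $\mathfrak C$-cowreath with structure maps $\xi:\mathfrak C\otimes M\to\mathfrak C$ and $\delta:\mathfrak C\otimes M\to\mathfrak C\otimes M\otimes M$. Then the $A$-bimodule $\mathfrak C\otimes M$ is an $A$-coring with comultiplication and counit $$\Delta'=(\mathfrak C\otimes\mathfrak m\otimes M)\circ(\mathfrak C\otimes\delta)\circ(\Delta\otimes M),\qquad \varepsilon'=\varepsilon\circ\xi.$$ Moreover, $\xi:\mathfrak C\otimes M\to\mathfrak C$ is a morphism of $A$-corings.
   Context: Fix a commutative ring $\mathbb K$; rings are associative unital $\mathbb K$-algebras, bimodules unital and $\mathbb K$-central. $A$ is a ring, $\otimes=\otimes_A$, canonical unit isomorphisms are suppressed, identity maps are denoted by the objects. An $A$-coring $(\mathfrak C,\Delta,\varepsilon)$ is an $A$-bimodule with $A$-bilinear $\Delta:\mathfrak C\to\mathfrak C\otimes\mathfrak C$, $\varepsilon:\mathfrak C\to A$, coassociative and counital; a morphism of $A$-corings $\phi:\mathfrak D\to\mathfrak C$ is an $A$-bilinear map with $\varepsilon_{\mathfrak C}\phi=\varepsilon_{\mathfrak D}$ and $(\phi\otimes\phi)\Delta_{\mathfrak D}=\Delta_{\mathfrak C}\phi$. The category $\mathscr R_{(\mathfrak C:A)}$ has objects $(M,\mathfrak m)$, $M$ an $A$-bimodule, $\mathfrak m:\mathfrak C\otimes M\to M\otimes\mathfrak C$ $A$-bilinear with $(M\otimes\Delta)\mathfrak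 m=(\mathfrak m\otimes\mathfrak C)(\mathfrak C\otimes\mathfrak m)(\Delta\otimes M)$ and $(M\otimes\varepsilon)\mathfrak m=\varepsilon\otimes M$; $\mathfrak C\otimes M$ is then a $\mathfrak C$-bicomodule with left coaction $\Delta\otimes M$ and right coaction $(\mathfrak C\otimes\mathfrak m)(\Delta\otimes M)$. A $\mathfrak C$-cowreath is an object $(M,\mathfrak m)$ with $\mathfrak C$-bicolinear maps $\xi:\mathfrak C\otimes M\to\mathfrak C$, $\delta:\mathfrak C\otimes M\to\mathfrak C\otimes M\otimes M$ (the latter bicomodule with left coaction $\Delta\otimes M\otimes M$ and right coaction $(\mathfrak C\otimes M\otimes\mathfrak m)(\mathfrak C\otimes\mathfrak m\otimes M)(\Delta\otimes M\otimes M)$) such that $(\xi\otimes M)\delta=\mathfrak C\otimes M$, $(M\otimes\xi)(\mathfrak m\otimes M)\delta=\mathfrak m$, $(\mathfrak m\otimes M\otimes M)(\delta\otimes M)\delta=(M\otimes\delta)(\mathfrak m\otimes M)\delta$; equivalently, a comonoid in the monoidal category $\mathscr R_{(\mathfrak C:A)}$. *)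

theory Defs
  imports "HOL-Library.Poly_Mapping"
begin

text \<open>An A-bimodule is given on an abelian group type 'x, with left action bm_l a x = a x,
 right action bm_r a x = x a, and a subgroup bm_null of elements regarded as zero
 (the bimodule is 'x / bm_null).  For an ordinary bimodule bm_null = {0}.  This presentation is
 needed because tensor products are built as quotients of free abelian groups.\<close>

record ('a, 'x) bimod =
  bm_l :: "'a \<Rightarrow> 'x \<Rightarrow> 'x"
  bm_r :: "'a \<Rightarrow> 'x \<Rightarrow> 'x"
  bm_null :: "'x set"

definition eqm :: "('a, 'x::ab_group_add) bimod \<Rightarrow> 'x \<Rightarrow> 'x \<Rightarrow> bool" where
  "eqm B x y \<longleftrightarrow> x - y \<in> bm_null B"

definition is_bimod :: "('a::ring_1, 'x::ab_group_add) bimod \<Rightarrow> bool" where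
  "is_bimod B \<longleftrightarrow>
     0 \<in> bm_null B \<and>
     (\<forall>x y. x \<in> bm_null B \<longrightarrow> y \<in> bm_null B \<longrightarrow> x + y \<in> bm_null B) \<and>
     (\<forall>x. x \<in> bm_null B \<longrightarrow> - x \<in> bm_null B) \<and>
     (\<forall>a x y. eqm B x y \<longrightarrow> eqm B (bm_l B a x) (bm_l B a y)) \<and>
     (\<forall>a x y. eqm B x y \<longrightarrow> eqm B (bm_r B a x) (bm_r B a y)) \<and>
     (\<forall>a x y. eqm B (bm_l B a (x + y)) (bm_l B a x + bm_l B a y)) \<and>
     (\<forall>a b x. eqm B (bm_l B (a + b) x) (bm_l B a x + bm_l B b x)) \<and>
     (\<forall>a b x. eqm B (bm_l B (a * b) x) (bm_l B a (bm_l B b x))) \<and>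
     (\<forall>x. eqm B (bm_l B 1 x) x) \<and>
     (\<forall>a x y. eqm B (bm_r B a (x + y)) (bm_r B a x + bm_r B a y)) \<and>
     (\<forall>a b x. eqm B (bm_r B (a + b) x) (bm_r B a x + bm_r B b x)) \<and>
     (\<forall>a b x. eqm B (bm_r B (a * b) x) (bm_r B b (bm_r B a x))) \<and>
     (\<forall>x. eqm B (bm_r B 1 x) x) \<and>
     (\<forall>a b x. eqm B (bm_l B a (bm_r B b x)) (bm_r B b (bm_l B a x)))"

definition ring_bimod :: "('a::ring_1, 'a) bimod" where
  "ring_bimod = \<lparr>bm_l = (\<lambda>a x. a * x), bm_r = (\<lambda>a x. x * a), bm_null = {0}\<rparr>"

inductive_set zspan :: "'x::ab_group_add set \<Rightarrow> 'x set" for S where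
  zspan_0: "0 \<in> zspan S"
| zspan_add: "s \<in> S \<Longrightarrow> u \<in> zspan S \<Longrightarrow> u + s \<in> zspan S"
| zspan_diff: "s \<in> S \<Longrightarrow> u \<in> zspan S \<Longrightarrow> u - s \<in> zspan S"

definition tensor_rels :: "('a, 'x::ab_group_add) bimod \<Rightarrow> ('a, 'y::ab_group_add) bimod
    \<Rightarrow> ('x \<times> 'y \<Rightarrow>\<^sub>0 int) set" where
  "tensor_rels B D =
     {frag_of (x + x', y) - frag_of (x, y) - frag_of (x', y) | x x' y. True} \<union>
     {frag_of (x, y + y') - frag_of (x, y) - frag_of (x, y') | x y y'. True} \<union>
     {frag_of (bm_r B a x, y) - frag_of (x, bm_l D a y) | a x y. True} \<union>
     {frag_of (x, y) | x y. x \<in> bm_null B} \<union>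
     {frag_of (x, y) | x y. y \<in> bm_null D}"

definition tensor :: "('a, 'x::ab_group_add) bimod \<Rightarrow> ('a, 'y::ab_group_add) bimod
    \<Rightarrow> ('a, 'x \<times> 'y \<Rightarrow>\<^sub>0 int) bimod" where
  "tensor B D =
     \<lparr>bm_l = (\<lambda>a. frag_extend (\<lambda>(x, y). frag_of (bm_l B a x, y))),
      bm_r = (\<lambda>a. frag_extend (\<lambda>(x, y). frag_of (x, bm_r D a y))),
      bm_null = zspan (tensor_rels B D)\<rparr>"

definition tmap :: "('x \<Rightarrow> 'x') \<Rightarrow> ('y \<Rightarrow> 'y') \<Rightarrow> ('x \<times> 'y \<Rightarrow>\<^sub>0 int) \<Rightarrow> ('x' \<times> 'y' \<Rightarrow>\<^sub>0 int)" where
  "tmap f g = frag_extend (\<lambda>(x, y). frag_of (f x, g y))"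

definition asr :: "(('x \<times> 'y \<Rightarrow>\<^sub>0 int) \<times> 'z \<Rightarrow>\<^sub>0 int) \<Rightarrow> ('x \<times> ('y \<times> 'z \<Rightarrow>\<^sub>0 int) \<Rightarrow>\<^sub>0 int)" where
  "asr = frag_extend (\<lambda>(u, z). frag_extend (\<lambda>(x, y). frag_of (x, frag_of (y, z))) u)"

definition asl :: "('x \<times> ('y \<times> 'z \<Rightarrow>\<^sub>0 int) \<Rightarrow>\<^sub>0 int) \<Rightarrow> (('x \<times> 'y \<Rightarrow>\<^sub>0 int) \<times> 'z \<Rightarrow>\<^sub>0 int)" where
  "asl = frag_extend (\<lambda>(x, v). frag_extend (\<lambda>(y, z). frag_of (frag_of (x, y), z)) v)"

definition zmul :: "int \<Rightarrow> 'x::ab_group_add \<Rightarrow> 'x" where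
  "zmul n x = (if 0 \<le> n then (\<Sum>i<nat n. x) else - (\<Sum>i<nat (- n). x))"

definition gext :: "('b \<Rightarrow> 'x::ab_group_add) \<Rightarrow> ('b \<Rightarrow>\<^sub>0 int) \<Rightarrow> 'x" where
  "gext f u = (\<Sum>k\<in>Poly_Mapping.keys u. zmul (Poly_Mapping.lookup u k) (f k))"

definition lunit :: "('a, 'x::ab_group_add) bimod \<Rightarrow> ('a \<times> 'x \<Rightarrow>\<^sub>0 int) \<Rightarrow> 'x" where
  "lunit B = gext (\<lambda>(a, x). bm_l B a x)"

definition runit :: "('a, 'x::ab_group_add) bimod \<Rightarrow> ('x \<times> 'a \<Rightarrow>\<^sub>0 int) \<Rightarrow> 'x" where
  "runit B = gext (\<lambda>(x, a). bm_r B a x)"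

definition mapeq :: "('a, 'y::ab_group_add) bimod \<Rightarrow> ('x \<Rightarrow> 'y) \<Rightarrow> ('x \<Rightarrow> 'y) \<Rightarrow> bool" where
  "mapeq D f g \<longleftrightarrow> (\<forall>x. eqm D (f x) (g x))"

definition bilinear :: "('a, 'x::ab_group_add) bimod \<Rightarrow> ('a, 'y::ab_group_add) bimod \<Rightarrow> ('x \<Rightarrow> 'y) \<Rightarrow> bool" where
  "bilinear B D f \<longleftrightarrow>
     (\<forall>x y. eqm B x y \<longrightarrow> eqm D (f x) (f y)) \<and>
     (\<forall>x y. eqm D (f (x + y)) (f x + f y)) \<and>
     (\<forall>a x. eqm D (f (bm_l B a x)) (bm_l D a (f x))) \<and>
     (\<forall>a x. eqm D (f (bm_r B a x)) (bm_r D a (f x)))"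

definition is_coring :: "('a::ring_1, 'c::ab_group_add) bimod \<Rightarrow> ('c \<Rightarrow> ('c \<times> 'c \<Rightarrow>\<^sub>0 int)) \<Rightarrow> ('c \<Rightarrow> 'a) \<Rightarrow> bool" where
  "is_coring C \<Delta> \<epsilon> \<longleftrightarrow>
     is_bimod C \<and> bilinear C (tensor C C) \<Delta> \<and> bilinear C ring_bimod \<epsilon> \<and>
     mapeq (tensor C (tensor C C)) (asr \<circ> tmap \<Delta> id \<circ> \<Delta>) (tmap id \<Delta> \<circ> \<Delta>) \<and>
     mapeq C (lunit C \<circ> tmap \<epsilon> id \<circ> \<Delta>) id \<and>
     mapeq C (runit C \<circ> tmap id \<epsilon> \<circ> \<Delta>) id"

definition coring_morph :: "('a::ring_1, 'd::ab_group_add) bimod \<Rightarrow> ('a, 'c::ab_group_add) bimod \<Rightarrow> ('d \<Rightarrow> 'c)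
    \<Rightarrow> ('d \<Rightarrow> ('d \<times> 'd \<Rightarrow>\<^sub>0 int)) \<Rightarrow> ('d \<Rightarrow> 'a) \<Rightarrow> ('c \<Rightarrow> ('c \<times> 'c \<Rightarrow>\<^sub>0 int)) \<Rightarrow> ('c \<Rightarrow> 'a) \<Rightarrow> bool" where
  "coring_morph D C \<phi> \<Delta>D \<epsilon>D \<Delta>C \<epsilon>C \<longleftrightarrow>
     bilinear D C \<phi> \<and>
     mapeq ring_bimod (\<epsilon>C \<circ> \<phi>) \<epsilon>D \<and>
     mapeq (tensor C C) (tmap \<phi> \<phi> \<circ> \<Delta>D) (\<Delta>C \<circ> \<phi>)"

definition in_R :: "('a::ring_1, 'c::ab_group_add) bimod \<Rightarrow> ('c \<Rightarrow> ('c \<times> 'c \<Rightarrow>\<^sub>0 int)) \<Rightarrow> ('c \<Rightarrow> 'a)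
    \<Rightarrow> ('a, 'm::ab_group_add) bimod \<Rightarrow> (('c \<times> 'm \<Rightarrow>\<^sub>0 int) \<Rightarrow> ('m \<times> 'c \<Rightarrow>\<^sub>0 int)) \<Rightarrow> bool" where
  "in_R C \<Delta> \<epsilon> M mm \<longleftrightarrow>
     is_bimod M \<and> bilinear (tensor C M) (tensor M C) mm \<and>
     mapeq (tensor (tensor M C) C) (asl \<circ> tmap id \<Delta> \<circ> mm)
        (tmap mm id \<circ> asl \<circ> tmap id mm \<circ> asr \<circ> tmap \<Delta> id) \<and>
     mapeq M (runit M \<circ> tmap id \<epsilon> \<circ> mm) (lunit M \<circ> tmap \<epsilon> id)"

text \<open>Coactions: left and right coaction of C \<otimes> M, and right coaction of C \<otimes> M \<otimes> M
 (the left coaction of C \<otimes> (M \<otimes> M) is again asr \<circ> tmap \<Delta> id).\<close>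
definition cm_lco where "cm_lco \<Delta> = asr \<circ> tmap \<Delta> id"
definition cm_rco where "cm_rco \<Delta> mm = asl \<circ> tmap id mm \<circ> asr \<circ> tmap \<Delta> id"
definition cmm_rco where
  "cmm_rco \<Delta> mm = asl \<circ> tmap id asl \<circ> tmap id (tmap id mm) \<circ> tmap id (asr \<circ> tmap mm id \<circ> asl)
                    \<circ> asr \<circ> tmap \<Delta> id"

definition is_cowreath :: "('a::ring_1, 'c::ab_group_add) bimod \<Rightarrow> ('c \<Rightarrow> ('c \<times> 'c \<Rightarrow>\<^sub>0 int)) \<Rightarrow> ('c \<Rightarrow> 'a)
    \<Rightarrow> ('a, 'm::ab_group_add) bimod \<Rightarrow> (('c \<times> 'm \<Rightarrow>\<^sub>0 int) \<Rightarrow> ('m \<times> 'c \<Rightarrow>\<^sub>0 int))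
    \<Rightarrow> (('c \<times> 'm \<Rightarrow>\<^sub>0 int) \<Rightarrow> 'c)
    \<Rightarrow> (('c \<times> 'm \<Rightarrow>\<^sub>0 int) \<Rightarrow> ('c \<times> ('m \<times> 'm \<Rightarrow>\<^sub>0 int) \<Rightarrow>\<^sub>0 int)) \<Rightarrow> bool" where
  "is_cowreath C \<Delta> \<epsilon> M mm \<xi> \<delta> \<longleftrightarrow>
     in_R C \<Delta> \<epsilon> M mm \<and>
     bilinear (tensor C M) C \<xi> \<and>
     mapeq (tensor C C) (\<Delta> \<circ> \<xi>) (tmap id \<xi> \<circ> cm_lco \<Delta>) \<and>
     mapeq (tensor C C) (\<Delta> \<circ> \<xi>) (tmap \<xi> id \<circ> cm_rco \<Delta> mm) \<and>
     bilinear (tensor C M) (tensor C (tensor M M)) \<delta> \<and>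
     mapeq (tensor C (tensor C (tensor M M))) (cm_lco \<Delta> \<circ> \<delta>) (tmap id \<delta> \<circ> cm_lco \<Delta>) \<and>
     mapeq (tensor (tensor C (tensor M M)) C) (cmm_rco \<Delta> mm \<circ> \<delta>) (tmap \<delta> id \<circ> cm_rco \<Delta> mm) \<and>
     mapeq (tensor C M) (tmap \<xi> id \<circ> asl \<circ> \<delta>) id \<and>
     mapeq (tensor M C) (tmap id \<xi> \<circ> asr \<circ> tmap mm id \<circ> asl \<circ> \<delta>) mm \<and>
     mapeq (tensor M (tensor C (tensor M M)))
        (asr \<circ> tmap mm id \<circ> asl \<circ> tmap id asr \<circ> asr \<circ> tmap \<delta> id \<circ> asl \<circ> \<delta>)
        (tmap id \<delta> \<circ> asr \<circ> tmap mm id \<circ> asl \<circ> \<delta>)"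

definition cw_comult where
  "cw_comult \<Delta> mm \<delta> = asl \<circ> tmap id (asr \<circ> tmap mm id \<circ> asl) \<circ> tmap id \<delta> \<circ> asr \<circ> tmap \<Delta> id"

end

theory Submission
  imports Defs
begin

text \<open>Every structure map is induced by a map on generators of free abelian groups, so all
  identities are proved on representatives modulo the null subgroups.  The counit laws of
  \<open>\<Delta>'\<close> and the morphism property of \<open>\<xi>\<close> follow from the counit laws of \<open>\<Delta>\<close> and
  \<open>\<delta>\<close> together with the colinearity of \<open>\<xi>\<close>.  For coassociativity, both
  \<open>(\<Delta>' \<otimes> C\<otimes>M) \<Delta>'\<close> and \<open>(C\<otimes>M \<otimes> \<Delta>') \<Delta>'\<close> are rewritten, using coassociativity of
  \<open>\<Delta>\<close>, the colinearity of \<open>\<delta>\<close>, the compatibility of \<open>mm\<close> with \<open>\<Delta>\<close> and the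
  coassociativity of \<open>\<delta>\<close>, into normal forms which differ only by associators; these are
  compared by flattening iterated tensors into free abelian groups on tuples.\<close>

definition null_subgroup :: "('a, 'x::ab_group_add) bimod \<Rightarrow> bool" where
  "null_subgroup D \<longleftrightarrow> 0 \<in> bm_null D
     \<and> (\<forall>x y. x \<in> bm_null D \<longrightarrow> y \<in> bm_null D \<longrightarrow> x + y \<in> bm_null D)
     \<and> (\<forall>x. x \<in> bm_null D \<longrightarrow> - x \<in> bm_null D)"

lemma null_subgroup_bimod: "is_bimod D \<Longrightarrow> null_subgroup D"
  by (simp add: null_subgroup_def is_bimod_def)

lemma null_subgroup_ring [simp]: "null_subgroup ring_bimod"
  by (simp add: null_subgroup_def ring_bimod_def)

lemma eqm_ring_bimod [simp]: "eqm ring_bimod x y \<longleftrightarrow> x = y"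
  by (simp add: eqm_def ring_bimod_def)

context
  fixes D :: "('a, 'x::ab_group_add) bimod"
  assumes null: "null_subgroup D"
begin

lemma null_zero: "0 \<in> bm_null D"
  using null by (simp add: null_subgroup_def)

lemma null_add: "x \<in> bm_null D \<Longrightarrow> y \<in> bm_null D \<Longrightarrow> x + y \<in> bm_null D"
  using null by (simp add: null_subgroup_def)

lemma null_uminus: "x \<in> bm_null D \<Longrightarrow> - x \<in> bm_null D"
  using null by (simp add: null_subgroup_def)

lemma null_diff: "x \<in> bm_null D \<Longrightarrow> y \<in> bm_null D \<Longrightarrow> x - y \<in> bm_null D"
  by (metis diff_conv_add_uminus null_add null_uminus)

lemma eqm_refl: "eqm D x x"
  by (simp add: eqm_def null_zero)

lemma eqm_sym: "eqm D x y \<Longrightarrow> eqm D y x"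
  unfolding eqm_def using null_uminus[of "x - y"] by simp

lemma eqm_trans: "eqm D x y \<Longrightarrow> eqm D y z \<Longrightarrow> eqm D x z"
  unfolding eqm_def using null_add[of "x - y" "y - z"] by simp

lemma eqm_add: "eqm D x x' \<Longrightarrow> eqm D y y' \<Longrightarrow> eqm D (x + y) (x' + y')"
  unfolding eqm_def using null_add[of "x - x'" "y - y'"] by (simp add: algebra_simps)

lemma eqm_uminus: "eqm D x x' \<Longrightarrow> eqm D (- x) (- x')"
  unfolding eqm_def using null_uminus[of "x - x'"] by simp

lemma eqm_diff: "eqm D x x' \<Longrightarrow> eqm D y y' \<Longrightarrow> eqm D (x - y) (x' - y')"
  by (metis diff_conv_add_uminus eqm_add eqm_uminus)

end

section \<open>Free abelian groups and linear extension\<close>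

lemma zspan_base: "s \<in> S \<Longrightarrow> s \<in> zspan S"
  using zspan.zspan_add[OF _ zspan.zspan_0] by fastforce

lemma zspan_add_closed:
  assumes "u \<in> zspan S" and "v \<in> zspan S"
  shows "u + v \<in> zspan S"
  using assms(2)
proof (induction v rule: zspan.induct)
  case zspan_0 then show ?case using assms(1) by simp
next
  case (zspan_add s w) then show ?case by (metis add.assoc zspan.zspan_add)
next
  case (zspan_diff s w) then show ?case by (metis add_diff_eq zspan.zspan_diff)
qed

lemma zspan_uminus_closed: "u \<in> zspan S \<Longrightarrow> - u \<in> zspan S"
proof (induction u rule: zspan.induct)
  case zspan_0 then show ?case by (simp add: zspan.zspan_0)
next
  case (zspan_add s w)
  have "- (w + s) = - w - s" by simp
  then show ?case using zspan_add by (metis zspan.zspan_diff)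
next
  case (zspan_diff s w)
  have "- (w - s) = - w + s" by simp
  then show ?case using zspan_diff by (metis zspan.zspan_add)
qed

lemma zspan_diff_closed: "u \<in> zspan S \<Longrightarrow> v \<in> zspan S \<Longrightarrow> u - v \<in> zspan S"
  by (metis diff_conv_add_uminus zspan_add_closed zspan_uminus_closed)

lemma zspan_frag_extend: "(\<And>k. h k \<in> zspan S) \<Longrightarrow> frag_extend h u \<in> zspan S"
  using subset_UNIV[of "Poly_Mapping.keys u"]
  by (induction u rule: frag_induction) (simp_all add: zspan.zspan_0 frag_extend_diff zspan_diff_closed)

lemma frag_extend_frag_of_id [simp]: "frag_extend frag_of u = u"
  by (metis frag_expansion)

lemma frag_extend_frag_extend:
  "frag_extend f (frag_extend g u) = frag_extend (\<lambda>k. frag_extend f (g k)) u"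
  using subset_UNIV[of "Poly_Mapping.keys u"]
  by (induction u rule: frag_induction) (auto simp: frag_extend_diff)

lemma frag_extend_add_fun: "frag_extend (\<lambda>k. f k + g k) u = frag_extend f u + frag_extend g u"
  by (simp add: frag_extend_def frag_cmul_distrib2 sum.distrib)

lemma frag_extend_diff_fun: "frag_extend (\<lambda>k. f k - g k) u = frag_extend f u - frag_extend g u"
  using frag_extend_add_fun[of "\<lambda>k. f k - g k" g u] by (simp add: algebra_simps)

lemma frag_extend_swap:
  "frag_extend (\<lambda>a. frag_extend (f a) w) v = frag_extend (\<lambda>b. frag_extend (\<lambda>a. f a b) v) w"
  using subset_UNIV[of "Poly_Mapping.keys v"]
proof (induction v rule: frag_induction)
  case zero then show ?case by (simp add: frag_extend_def)
next
  case (one x) then show ?case by simp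
next
  case (diff a b) then show ?case by (simp add: frag_extend_diff frag_extend_diff_fun)
qed

lemma zmul_0 [simp]: "zmul 0 x = 0"
  by (simp add: zmul_def)

lemma zmul_succ: "zmul (n + 1) x = zmul n x + x"
proof (cases "0 \<le> n")
  case True
  then have "nat (n + 1) = Suc (nat n)" by simp
  with True show ?thesis by (simp add: zmul_def)
next
  case False
  show ?thesis
  proof (cases "n = -1")
    case True then show ?thesis by (simp add: zmul_def)
  next
    case n: False
    with False have "nat (- n) = Suc (nat (- (n + 1)))" by simp
    with False n show ?thesis by (simp add: zmul_def)
  qed
qed

lemma zmul_pred: "zmul (n - 1) x = zmul n x - x"
  using zmul_succ[of "n - 1" x] by simp

lemma zmul_1 [simp]: "zmul 1 x = x"
  using zmul_succ[of 0 x] by simp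

lemma zmul_add: "zmul (m + n) x = zmul m x + zmul n x"
proof (induction n rule: int_induct[where k = 0])
  case base then show ?case by simp
next
  case (step1 i)
  have "zmul (m + (i + 1)) x = zmul (m + i) x + x"
    using zmul_succ[of "m + i" x] by (simp add: add.assoc)
  with step1.IH show ?case by (simp add: zmul_succ)
next
  case (step2 i)
  have "zmul (m + (i - 1)) x = zmul (m + i) x - x"
    using zmul_pred[of "m + i" x] by (simp add: add_diff_eq)
  with step2.IH show ?case by (simp add: zmul_pred)
qed

lemma gext_superset:
  assumes "finite S" "Poly_Mapping.keys u \<subseteq> S"
  shows "gext f u = (\<Sum>k\<in>S. zmul (Poly_Mapping.lookup u k) (f k))"
  unfolding gext_def
  by (rule sum.mono_neutral_left) (use assms in \<open>auto simp: in_keys_iff\<close>)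

lemma gext_add: "gext f (u + v) = gext f u + gext f v"
proof -
  let ?S = "Poly_Mapping.keys u \<union> Poly_Mapping.keys v"
  have "gext f (u + v) = (\<Sum>k\<in>?S. zmul (Poly_Mapping.lookup (u + v) k) (f k))"
    by (rule gext_superset) (simp_all add: keys_add)
  also have "\<dots> = (\<Sum>k\<in>?S. zmul (Poly_Mapping.lookup u k) (f k))
                 + (\<Sum>k\<in>?S. zmul (Poly_Mapping.lookup v k) (f k))"
    by (simp add: lookup_add zmul_add sum.distrib)
  also have "\<dots> = gext f u + gext f v"
    by (simp add: gext_superset[of ?S])
  finally show ?thesis .
qed

lemma gext_0 [simp]: "gext f 0 = 0"
  by (simp add: gext_def)

lemma gext_diff: "gext f (u - v) = gext f u - gext f v"
  using gext_add[of f "u - v" v] by (simp add: algebra_simps)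

lemma gext_frag_of [simp]: "gext f (frag_of k) = f k"
  by (simp add: gext_def)

lemma gext_frag_extend: "gext f (frag_extend h u) = gext (\<lambda>k. gext f (h k)) u"
  using subset_UNIV[of "Poly_Mapping.keys u"]
  by (induction u rule: frag_induction) (auto simp: frag_extend_diff gext_diff)

lemma gext_eq_frag_extend: "gext F u = frag_extend F u"
  using subset_UNIV[of "Poly_Mapping.keys u"]
  by (induction u rule: frag_induction) (auto simp: gext_diff frag_extend_diff)

section \<open>The defining relations of the tensor product\<close>

lemma null_subgroup_tensor [simp]: "null_subgroup (tensor B D)"
  by (simp add: null_subgroup_def tensor_def zspan.zspan_0 zspan_add_closed zspan_uminus_closed)

lemmas tensor_eqm_refl = eqm_refl[OF null_subgroup_tensor]
  and tensor_eqm_sym = eqm_sym[OF null_subgroup_tensor]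
  and tensor_eqm_trans [trans] = eqm_trans[OF null_subgroup_tensor]
  and tensor_eqm_diff = eqm_diff[OF null_subgroup_tensor]

lemma tensor_simps [simp]:
  "bm_null (tensor B D) = zspan (tensor_rels B D)"
  "bm_l (tensor B D) a = frag_extend (\<lambda>(x, y). frag_of (bm_l B a x, y))"
  "bm_r (tensor B D) a = frag_extend (\<lambda>(x, y). frag_of (x, bm_r D a y))"
  by (simp_all add: tensor_def)

lemma tensor_rel_eqm: "u - v \<in> tensor_rels B D \<Longrightarrow> eqm (tensor B D) u v"
  by (simp add: eqm_def zspan_base)

lemma tensor_add_left: "eqm (tensor B D) (frag_of (x + x', y)) (frag_of (x, y) + frag_of (x', y))"
  by (rule tensor_rel_eqm) (unfold tensor_rels_def diff_diff_add[symmetric], blast)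

lemma tensor_add_right: "eqm (tensor B D) (frag_of (x, y + y')) (frag_of (x, y) + frag_of (x, y'))"
  by (rule tensor_rel_eqm) (unfold tensor_rels_def diff_diff_add[symmetric], blast)

lemma tensor_balanced: "eqm (tensor B D) (frag_of (bm_r B a x, y)) (frag_of (x, bm_l D a y))"
  by (rule tensor_rel_eqm) (unfold tensor_rels_def, blast)

lemma tensor_null_left: "x \<in> bm_null B \<Longrightarrow> eqm (tensor B D) (frag_of (x, y)) 0"
  by (rule tensor_rel_eqm) (unfold tensor_rels_def diff_zero, blast)

lemma tensor_null_right: "y \<in> bm_null D \<Longrightarrow> eqm (tensor B D) (frag_of (x, y)) 0"
  by (rule tensor_rel_eqm) (unfold tensor_rels_def diff_zero, blast)

lemma tensor_diff_left: "eqm (tensor B D) (frag_of (x - x', y)) (frag_of (x, y) - frag_of (x', y))"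
  using tensor_eqm_diff[OF tensor_add_left[of B D "x - x'" x' y] tensor_eqm_refl, of "frag_of (x', y)"]
  by (simp add: tensor_eqm_sym)

lemma tensor_diff_right: "eqm (tensor B D) (frag_of (x, y - y')) (frag_of (x, y) - frag_of (x, y'))"
  using tensor_eqm_diff[OF tensor_add_right[of B D x "y - y'" y'] tensor_eqm_refl, of "frag_of (x, y')"]
  by (simp add: tensor_eqm_sym)

lemma tensor_eqm_left: "eqm B x x' \<Longrightarrow> eqm (tensor B D) (frag_of (x, y)) (frag_of (x', y))"
  using tensor_null_left[of "x - x'" B D y] tensor_diff_left[of B D x x' y]
  by (metis eqm_def diff_zero tensor_eqm_sym tensor_eqm_trans)

lemma tensor_eqm_right: "eqm D y y' \<Longrightarrow> eqm (tensor B D) (frag_of (x, y)) (frag_of (x, y'))"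
  using tensor_null_right[of "y - y'" D B x] tensor_diff_right[of B D x y y']
  by (metis eqm_def diff_zero tensor_eqm_sym tensor_eqm_trans)

lemma tensor_gext_left:
  "eqm (tensor B D) (frag_of (gext F w, y)) (frag_extend (\<lambda>k. frag_of (F k, y)) w)"
  using subset_UNIV[of "Poly_Mapping.keys w"]
proof (induction w rule: frag_induction)
  case zero
  then show ?case
    using tensor_diff_left[of B D 0 0 y] by (simp add: frag_extend_def)
next
  case (one x) then show ?case by (simp add: tensor_eqm_refl)
next
  case (diff a b)
  then show ?case
    unfolding frag_extend_diff gext_diff by (rule tensor_eqm_trans[OF tensor_diff_left tensor_eqm_diff])
qed

lemma tensor_gext_right:
  "eqm (tensor B D) (frag_of (x, gext G w)) (frag_extend (\<lambda>k. frag_of (x, G k)) w)"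
  using subset_UNIV[of "Poly_Mapping.keys w"]
proof (induction w rule: frag_induction)
  case zero
  then show ?case
    using tensor_diff_right[of B D x 0 0] by (simp add: frag_extend_def)
next
  case (one y) then show ?case by (simp add: tensor_eqm_refl)
next
  case (diff a b)
  then show ?case
    unfolding frag_extend_diff gext_diff by (rule tensor_eqm_trans[OF tensor_diff_right tensor_eqm_diff])
qed

lemma eqm_frag_extend:
  assumes "\<And>k. eqm (tensor B D) (h k) (h' k)"
  shows "eqm (tensor B D) (frag_extend h u) (frag_extend h' u)"
proof -
  have "frag_extend (\<lambda>k. h k - h' k) u \<in> zspan (tensor_rels B D)"
    by (rule zspan_frag_extend) (use assms in \<open>simp add: eqm_def\<close>)
  then show ?thesis
    by (simp add: eqm_def frag_extend_diff_fun)
qed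

definition well_defined ::
    "('a, 'x::ab_group_add) bimod \<Rightarrow> ('a, 'y::ab_group_add) bimod \<Rightarrow> ('x \<Rightarrow> 'y) \<Rightarrow> bool" where
  "well_defined B D f \<longleftrightarrow> (\<forall>x y. eqm B x y \<longrightarrow> eqm D (f x) (f y))"

definition additive_mod :: "('a, 'y::ab_group_add) bimod \<Rightarrow> ('x::ab_group_add \<Rightarrow> 'y) \<Rightarrow> bool" where
  "additive_mod D f \<longleftrightarrow> (\<forall>x y. eqm D (f (x + y)) (f x + f y))"

definition right_linear ::
    "('a, 'x::ab_group_add) bimod \<Rightarrow> ('a, 'y::ab_group_add) bimod \<Rightarrow> ('x \<Rightarrow> 'y) \<Rightarrow> bool" where
  "right_linear B D f \<longleftrightarrow> well_defined B D f \<and> additive_mod D f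
     \<and> (\<forall>a x. eqm D (f (bm_r B a x)) (bm_r D a (f x)))"

definition left_linear ::
    "('a, 'x::ab_group_add) bimod \<Rightarrow> ('a, 'y::ab_group_add) bimod \<Rightarrow> ('x \<Rightarrow> 'y) \<Rightarrow> bool" where
  "left_linear B D f \<longleftrightarrow> well_defined B D f \<and> additive_mod D f
     \<and> (\<forall>a x. eqm D (f (bm_l B a x)) (bm_l D a (f x)))"

lemma bilinear_iff_right_left_linear: "bilinear B D f \<longleftrightarrow> right_linear B D f \<and> left_linear B D f"
  by (auto simp: bilinear_def right_linear_def left_linear_def well_defined_def additive_mod_def)

lemma bilinear_eqm: "bilinear B D f \<Longrightarrow> eqm B x y \<Longrightarrow> eqm D (f x) (f y)"
  by (simp add: bilinear_def)

lemma bilinear_bm_l: "bilinear B D f \<Longrightarrow> eqm D (f (bm_l B a x)) (bm_l D a (f x))"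
  by (simp add: bilinear_def)

lemma bilinear_bm_r: "bilinear B D f \<Longrightarrow> eqm D (f (bm_r B a x)) (bm_r D a (f x))"
  by (simp add: bilinear_def)

lemma bilinear_comp:
  assumes "bilinear B D f" "bilinear D E g" "null_subgroup E"
  shows "bilinear B E (g \<circ> f)"
  using assms(1,2) unfolding bilinear_def comp_def by (meson eqm_trans[OF assms(3)])

lemma bilinear_id: "null_subgroup B \<Longrightarrow> bilinear B B id"
  by (simp add: bilinear_def eqm_refl)

lemma additive_mod_zero:
  assumes "null_subgroup D" "additive_mod D f"
  shows "eqm D (f 0) 0"
proof -
  have "eqm D (f (0 + 0)) (f 0 + f 0)"
    using assms(2) unfolding additive_mod_def by blast
  then have "- f 0 \<in> bm_null D"
    by (simp add: eqm_def)
  then show ?thesis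
    using null_uminus[OF assms(1)] by (fastforce simp: eqm_def)
qed

lemma well_defined_null:
  assumes "null_subgroup D" "well_defined B D f" "additive_mod D f" "x \<in> bm_null B"
  shows "eqm D (f x) 0"
proof -
  have "eqm D (f x) (f 0)"
    using assms(2,4) by (simp add: well_defined_def eqm_def)
  then show ?thesis
    using additive_mod_zero[OF assms(1,3)] eqm_trans[OF assms(1)] by blast
qed

lemma additive_mod_diff:
  assumes "null_subgroup D" "additive_mod D f"
  shows "eqm D (f (a - b)) (f a - f b)"
proof -
  have "eqm D (f (a - b + b)) (f (a - b) + f b)"
    using assms(2) unfolding additive_mod_def by blast
  then have "f a - (f (a - b) + f b) \<in> bm_null D"
    by (simp add: eqm_def)
  then have "- (f a - (f (a - b) + f b)) \<in> bm_null D"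
    by (rule null_uminus[OF assms(1)])
  then show ?thesis
    by (simp add: eqm_def algebra_simps)
qed

lemma additive_mod_eqm_on_generators:
  assumes D: "null_subgroup D" and F: "additive_mod D F" and G: "additive_mod D G"
    and gen: "\<And>k. eqm D (F (frag_of k)) (G (frag_of k))"
  shows "eqm D (F u) (G u)"
  using subset_UNIV[of "Poly_Mapping.keys u"]
proof (induction u rule: frag_induction)
  case zero
  show ?case
    using additive_mod_zero[OF D F] additive_mod_zero[OF D G] eqm_trans[OF D] eqm_sym[OF D] by blast
next
  case (one x)
  show ?case by (rule gen)
next
  case (diff a b)
  have "eqm D (F (a - b)) (F a - F b)"
    by (rule additive_mod_diff[OF D F])
  moreover have "eqm D (F a - F b) (G a - G b)"
    using diff.IH by (rule eqm_diff[OF D])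
  moreover have "eqm D (G a - G b) (G (a - b))"
    by (rule eqm_sym[OF D additive_mod_diff[OF D G]])
  ultimately show ?case
    by (meson eqm_trans[OF D])
qed

lemma gext_well_defined_tensor:
  assumes X: "null_subgroup X"
    and add_left: "\<And>x x' y. eqm X (\<phi> (x + x', y)) (\<phi> (x, y) + \<phi> (x', y))"
    and add_right: "\<And>x y y'. eqm X (\<phi> (x, y + y')) (\<phi> (x, y) + \<phi> (x, y'))"
    and balanced: "\<And>a x y. eqm X (\<phi> (bm_r B a x, y)) (\<phi> (x, bm_l D a y))"
    and null_left: "\<And>x y. x \<in> bm_null B \<Longrightarrow> eqm X (\<phi> (x, y)) 0"
    and null_right: "\<And>x y. y \<in> bm_null D \<Longrightarrow> eqm X (\<phi> (x, y)) 0"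
  shows "well_defined (tensor B D) X (gext \<phi>)"
proof -
  have rel: "gext \<phi> s \<in> bm_null X" if "s \<in> tensor_rels B D" for s
  proof -
    from that consider
        (add_left) x x' y where "s = frag_of (x + x', y) - frag_of (x, y) - frag_of (x', y)"
      | (add_right) x y y' where "s = frag_of (x, y + y') - frag_of (x, y) - frag_of (x, y')"
      | (balanced) a x y where "s = frag_of (bm_r B a x, y) - frag_of (x, bm_l D a y)"
      | (null_left) x y where "s = frag_of (x, y)" "x \<in> bm_null B"
      | (null_right) x y where "s = frag_of (x, y)" "y \<in> bm_null D"
      unfolding tensor_rels_def by blast
    then show ?thesis
      by cases (use assms in \<open>simp_all add: gext_diff gext_add eqm_def diff_diff_add\<close>)
  qed
  have "gext \<phi> u \<in> bm_null X" if "u \<in> zspan (tensor_rels B D)" for u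
    using that
    by (induction u rule: zspan.induct)
      (simp_all add: null_zero[OF X] gext_add gext_diff null_add[OF X] null_diff[OF X] rel)
  then show ?thesis
    by (auto simp: well_defined_def eqm_def simp flip: gext_diff)
qed

lemma frag_extend_well_defined_tensor:
  assumes "\<And>x x' y. eqm (tensor B' D') (h (x + x', y)) (h (x, y) + h (x', y))"
    and "\<And>x y y'. eqm (tensor B' D') (h (x, y + y')) (h (x, y) + h (x, y'))"
    and "\<And>a x y. eqm (tensor B' D') (h (bm_r B a x, y)) (h (x, bm_l D a y))"
    and "\<And>x y. x \<in> bm_null B \<Longrightarrow> eqm (tensor B' D') (h (x, y)) 0"
    and "\<And>x y. y \<in> bm_null D \<Longrightarrow> eqm (tensor B' D') (h (x, y)) 0"
  shows "well_defined (tensor B D) (tensor B' D') (frag_extend h)"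
proof -
  have "gext h = frag_extend h"
    by (rule ext) (rule gext_eq_frag_extend)
  with gext_well_defined_tensor[OF null_subgroup_tensor assms] show ?thesis
    by simp
qed

lemmas frag_unfold = tmap_def asr_def asl_def frag_extend_frag_extend case_prod_unfold
  frag_extend_add frag_extend_diff

lemma tmap_id [simp]: "tmap id id = id" "tmap (\<lambda>x. x) (\<lambda>x. x) = (\<lambda>x. x)"
  by (auto simp: fun_eq_iff tmap_def case_prod_unfold)

lemma tmap_comp: "tmap f g (tmap f' g' u) = tmap (f \<circ> f') (g \<circ> g') u"
  by (simp add: frag_unfold)

lemma tmap_id_comp: "tmap id (g \<circ> g') = tmap id g \<circ> tmap id g'"
  by (rule ext) (simp add: tmap_comp)

lemma tmap_cong_left: "(\<And>x. eqm B (f x) (f' x)) \<Longrightarrow> eqm (tensor B D) (tmap f g u) (tmap f' g u)"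
  unfolding tmap_def by (rule eqm_frag_extend) (auto intro: tensor_eqm_left)

lemma tmap_cong_right: "(\<And>y. eqm D (g y) (g' y)) \<Longrightarrow> eqm (tensor B D) (tmap f g u) (tmap f g' u)"
  unfolding tmap_def by (rule eqm_frag_extend) (auto intro: tensor_eqm_right)

lemma tmap_well_defined:
  assumes B': "null_subgroup B'" and D': "null_subgroup D'"
    and f: "right_linear B B' f" and g: "left_linear D D' g"
  shows "well_defined (tensor B D) (tensor B' D') (tmap f g)"
  unfolding tmap_def
proof (rule frag_extend_well_defined_tensor; clarsimp)
  fix x x' y
  show "eqm (tensor B' D') (frag_of (f (x + x'), g y)) (frag_of (f x, g y) + frag_of (f x', g y))"
    by (rule tensor_eqm_trans[OF tensor_eqm_left tensor_add_left])
      (use f in \<open>simp add: right_linear_def additive_mod_def\<close>)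
next
  fix x y y'
  show "eqm (tensor B' D') (frag_of (f x, g (y + y'))) (frag_of (f x, g y) + frag_of (f x, g y'))"
    by (rule tensor_eqm_trans[OF tensor_eqm_right tensor_add_right])
      (use g in \<open>simp add: left_linear_def additive_mod_def\<close>)
next
  fix a x y
  have "eqm (tensor B' D') (frag_of (f (bm_r B a x), g y)) (frag_of (bm_r B' a (f x), g y))"
    using f by (intro tensor_eqm_left) (simp add: right_linear_def)
  also have "eqm (tensor B' D') \<dots> (frag_of (f x, bm_l D' a (g y)))"
    by (rule tensor_balanced)
  also have "eqm (tensor B' D') \<dots> (frag_of (f x, g (bm_l D a y)))"
    by (rule tensor_eqm_right, rule eqm_sym[OF D']) (use g in \<open>simp add: left_linear_def\<close>)
  finally show "eqm (tensor B' D') (frag_of (f (bm_r B a x), g y)) (frag_of (f x, g (bm_l D a y)))" .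
next
  fix x y
  assume "x \<in> bm_null B"
  then have "eqm B' (f x) 0"
    using f well_defined_null[OF B'] unfolding right_linear_def by blast
  then show "eqm (tensor B' D') (frag_of (f x, g y)) 0"
    by (intro tensor_null_left) (simp add: eqm_def)
next
  fix x y
  assume "y \<in> bm_null D"
  then have "eqm D' (g y) 0"
    using g well_defined_null[OF D'] unfolding left_linear_def by blast
  then show "eqm (tensor B' D') (frag_of (f x, g y)) 0"
    by (intro tensor_null_right) (simp add: eqm_def)
qed

lemma tmap_left_linear:
  assumes "null_subgroup B'" "null_subgroup D'" "bilinear B B' f" "left_linear D D' g"
  shows "left_linear (tensor B D) (tensor B' D') (tmap f g)"
proof -
  have "well_defined (tensor B D) (tensor B' D') (tmap f g)"
    using assms by (intro tmap_well_defined) (simp_all add: bilinear_iff_right_left_linear)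
  moreover have "eqm (tensor B' D') (tmap f g (bm_l (tensor B D) a u))
      (bm_l (tensor B' D') a (tmap f g u))" for a u
    unfolding tmap_def
    by (simp add: frag_extend_frag_extend case_prod_unfold)
      (intro eqm_frag_extend tensor_eqm_left bilinear_bm_l[OF assms(3)])
  ultimately show ?thesis
    by (simp add: left_linear_def additive_mod_def tmap_def frag_extend_add tensor_eqm_refl)
qed

lemma tmap_bilinear:
  assumes "null_subgroup B'" "null_subgroup D'" "bilinear B B' f" "bilinear D D' g"
  shows "bilinear (tensor B D) (tensor B' D') (tmap f g)"
proof -
  have "well_defined (tensor B D) (tensor B' D') (tmap f g)"
    using assms by (intro tmap_well_defined) (simp_all add: bilinear_iff_right_left_linear)
  moreover have "eqm (tensor B' D') (tmap f g (bm_l (tensor B D) a u))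
      (bm_l (tensor B' D') a (tmap f g u))" for a u
    unfolding tmap_def
    by (simp add: frag_extend_frag_extend case_prod_unfold)
      (intro eqm_frag_extend tensor_eqm_left bilinear_bm_l[OF assms(3)])
  moreover have "eqm (tensor B' D') (tmap f g (bm_r (tensor B D) a u))
      (bm_r (tensor B' D') a (tmap f g u))" for a u
    unfolding tmap_def
    by (simp add: frag_extend_frag_extend case_prod_unfold)
      (intro eqm_frag_extend tensor_eqm_right bilinear_bm_r[OF assms(4)])
  ultimately show ?thesis
    by (simp add: bilinear_def well_defined_def tmap_def frag_extend_add tensor_eqm_refl)
qed

lemma frag_of_pair_left_linear: "left_linear C (tensor C Y) (\<lambda>c. frag_of (c, t))"
  unfolding left_linear_def well_defined_def additive_mod_def
  by (auto intro: tensor_eqm_left tensor_add_left simp: tensor_eqm_refl)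

section \<open>Associators\<close>

lemma asr_inner_well_defined:
  "well_defined (tensor B D) (tensor B (tensor D E)) (frag_extend (\<lambda>(x, y). frag_of (x, frag_of (y, z))))"
proof (rule frag_extend_well_defined_tensor; clarsimp)
  fix x x' y
  show "eqm (tensor B (tensor D E)) (frag_of (x + x', frag_of (y, z)))
      (frag_of (x, frag_of (y, z)) + frag_of (x', frag_of (y, z)))"
    by (rule tensor_add_left)
next
  fix x y y'
  have "eqm (tensor B (tensor D E)) (frag_of (x, frag_of (y + y', z)))
      (frag_of (x, frag_of (y, z) + frag_of (y', z)))"
    by (intro tensor_eqm_right tensor_add_left)
  also have "eqm (tensor B (tensor D E)) \<dots> (frag_of (x, frag_of (y, z)) + frag_of (x, frag_of (y', z)))"
    by (rule tensor_add_right)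
  finally show "eqm (tensor B (tensor D E)) (frag_of (x, frag_of (y + y', z)))
      (frag_of (x, frag_of (y, z)) + frag_of (x, frag_of (y', z)))" .
next
  fix a x y
  show "eqm (tensor B (tensor D E)) (frag_of (bm_r B a x, frag_of (y, z))) (frag_of (x, frag_of (bm_l D a y, z)))"
    using tensor_balanced[of B "tensor D E" a x "frag_of (y, z)"] by simp
next
  fix x y
  assume "x \<in> bm_null B"
  then show "eqm (tensor B (tensor D E)) (frag_of (x, frag_of (y, z))) 0"
    by (rule tensor_null_left)
next
  fix x y
  assume "y \<in> bm_null D"
  then have "frag_of (y, z) \<in> bm_null (tensor D E)"
    using tensor_null_left[of y D E z] by (simp add: eqm_def)
  then show "eqm (tensor B (tensor D E)) (frag_of (x, frag_of (y, z))) 0"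
    by (rule tensor_null_right)
qed

lemma asr_well_defined: "well_defined (tensor (tensor B D) E) (tensor B (tensor D E)) asr"
proof -
  let ?T = "tensor B (tensor D E)"
  let ?A = "\<lambda>z. frag_extend (\<lambda>(x, y). frag_of (x, frag_of (y, z)))"
  show ?thesis
    unfolding asr_def
  proof (rule frag_extend_well_defined_tensor; clarsimp)
    fix u u' z
    show "eqm ?T (?A z (u + u')) (?A z u + ?A z u')"
      by (simp add: frag_extend_add tensor_eqm_refl)
  next
    fix u z z'
    have "eqm ?T (?A (z + z') u) (frag_extend (\<lambda>k. (\<lambda>(x, y). frag_of (x, frag_of (y, z))) k
        + (\<lambda>(x, y). frag_of (x, frag_of (y, z'))) k) u)"
      by (rule eqm_frag_extend)
        (auto intro: tensor_eqm_trans[OF tensor_eqm_right[OF tensor_add_right] tensor_add_right])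
    then show "eqm ?T (?A (z + z') u) (?A z u + ?A z' u)"
      by (simp only: frag_extend_add_fun)
  next
    fix a u z
    show "eqm ?T (?A z (frag_extend (\<lambda>(x, y). frag_of (x, bm_r D a y)) u)) (?A (bm_l E a z) u)"
      by (simp add: frag_extend_frag_extend case_prod_unfold)
        (intro eqm_frag_extend tensor_eqm_right tensor_balanced)
  next
    fix u z
    assume "u \<in> zspan (tensor_rels B D)"
    then have "eqm (tensor B D) u 0"
      by (simp add: eqm_def)
    then have "eqm ?T (?A z u) (?A z 0)"
      using asr_inner_well_defined[of B D E z] unfolding well_defined_def by blast
    then show "eqm ?T (?A z u) 0"
      by simp
  next
    fix u z
    assume "z \<in> bm_null E"
    then have "frag_of (y, z) \<in> bm_null (tensor D E)" for y
      using tensor_null_right[of z E D y] by (simp add: eqm_def)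
    then have "eqm ?T (?A z u) (frag_extend (\<lambda>_. 0) u)"
      by (intro eqm_frag_extend) (clarsimp intro!: tensor_null_right)
    then show "eqm ?T (?A z u) 0"
      by (simp add: frag_extend_def)
  qed
qed

lemma asr_bilinear: "bilinear (tensor (tensor B D) E) (tensor B (tensor D E)) asr"
  using asr_well_defined unfolding bilinear_def well_defined_def by (simp add: frag_unfold tensor_eqm_refl)

lemma asl_inner_well_defined:
  "well_defined (tensor D E) (tensor (tensor B D) E) (frag_extend (\<lambda>(y, z). frag_of (frag_of (x, y), z)))"
proof (rule frag_extend_well_defined_tensor; clarsimp)
  fix y y' z
  have "eqm (tensor (tensor B D) E) (frag_of (frag_of (x, y + y'), z))
      (frag_of (frag_of (x, y) + frag_of (x, y'), z))"
    by (intro tensor_eqm_left tensor_add_right)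
  also have "eqm (tensor (tensor B D) E) \<dots> (frag_of (frag_of (x, y), z) + frag_of (frag_of (x, y'), z))"
    by (rule tensor_add_left)
  finally show "eqm (tensor (tensor B D) E) (frag_of (frag_of (x, y + y'), z))
      (frag_of (frag_of (x, y), z) + frag_of (frag_of (x, y'), z))" .
next
  fix y z z'
  show "eqm (tensor (tensor B D) E) (frag_of (frag_of (x, y), z + z'))
      (frag_of (frag_of (x, y), z) + frag_of (frag_of (x, y), z'))"
    by (rule tensor_add_right)
next
  fix a y z
  show "eqm (tensor (tensor B D) E) (frag_of (frag_of (x, bm_r D a y), z)) (frag_of (frag_of (x, y), bm_l E a z))"
    using tensor_balanced[of "tensor B D" E a "frag_of (x, y)" z] by simp
next
  fix y z
  assume "y \<in> bm_null D"
  then have "frag_of (x, y) \<in> bm_null (tensor B D)"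
    using tensor_null_right[of y D B x] by (simp add: eqm_def)
  then show "eqm (tensor (tensor B D) E) (frag_of (frag_of (x, y), z)) 0"
    by (rule tensor_null_left)
next
  fix y z
  assume "z \<in> bm_null E"
  then show "eqm (tensor (tensor B D) E) (frag_of (frag_of (x, y), z)) 0"
    by (rule tensor_null_right)
qed

lemma asl_well_defined: "well_defined (tensor B (tensor D E)) (tensor (tensor B D) E) asl"
proof -
  let ?T = "tensor (tensor B D) E"
  let ?L = "\<lambda>x. frag_extend (\<lambda>(y, z). frag_of (frag_of (x, y), z))"
  show ?thesis
    unfolding asl_def
  proof (rule frag_extend_well_defined_tensor; clarsimp)
    fix x x' v
    have "eqm ?T (?L (x + x') v) (frag_extend (\<lambda>k. (\<lambda>(y, z). frag_of (frag_of (x, y), z)) k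
        + (\<lambda>(y, z). frag_of (frag_of (x', y), z)) k) v)"
      by (rule eqm_frag_extend)
        (auto intro: tensor_eqm_trans[OF tensor_eqm_left[OF tensor_add_left] tensor_add_left])
    then show "eqm ?T (?L (x + x') v) (?L x v + ?L x' v)"
      by (simp only: frag_extend_add_fun)
  next
    fix x v v'
    show "eqm ?T (?L x (v + v')) (?L x v + ?L x v')"
      by (simp add: frag_extend_add tensor_eqm_refl)
  next
    fix a x v
    show "eqm ?T (?L (bm_r B a x) v) (?L x (frag_extend (\<lambda>(y, z). frag_of (bm_l D a y, z)) v))"
      by (simp add: frag_extend_frag_extend case_prod_unfold)
        (intro eqm_frag_extend tensor_eqm_left tensor_balanced)
  next
    fix x v
    assume "x \<in> bm_null B"
    then have "frag_of (x, y) \<in> bm_null (tensor B D)" for y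
      using tensor_null_left[of x B D y] by (simp add: eqm_def)
    then have "eqm ?T (?L x v) (frag_extend (\<lambda>_. 0) v)"
      by (intro eqm_frag_extend) (clarsimp intro!: tensor_null_left)
    then show "eqm ?T (?L x v) 0"
      by (simp add: frag_extend_def)
  next
    fix x v
    assume "v \<in> zspan (tensor_rels D E)"
    then have "eqm (tensor D E) v 0"
      by (simp add: eqm_def)
    then have "eqm ?T (?L x v) (?L x 0)"
      using asl_inner_well_defined[of D E B x] unfolding well_defined_def by blast
    then show "eqm ?T (?L x v) 0"
      by simp
  qed
qed

lemma asl_bilinear: "bilinear (tensor B (tensor D E)) (tensor (tensor B D) E) asl"
  using asl_well_defined unfolding bilinear_def well_defined_def by (simp add: frag_unfold tensor_eqm_refl)

lemma asl_asr:
  fixes u :: "('x::ab_group_add \<times> 'y::ab_group_add \<Rightarrow>\<^sub>0 int) \<times> 'z::ab_group_add \<Rightarrow>\<^sub>0 int"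
  shows "eqm (tensor (tensor B D) E) (asl (asr u)) u"
proof -
  have "eqm (tensor (tensor B D) E) (frag_extend (\<lambda>k. asl (asr (frag_of k))) u) (frag_extend frag_of u)"
  proof (rule eqm_frag_extend)
    fix k :: "('x \<times> 'y \<Rightarrow>\<^sub>0 int) \<times> 'z"
    obtain w z where k: "k = (w, z)" by (cases k)
    have "asl (asr (frag_of k)) = frag_extend (\<lambda>k. frag_of (frag_of k, z)) w"
      by (simp add: k frag_unfold)
    with tensor_gext_left[of "tensor B D" E frag_of w z]
    show "eqm (tensor (tensor B D) E) (asl (asr (frag_of k))) (frag_of k)"
      by (simp add: k gext_eq_frag_extend tensor_eqm_sym)
  qed
  then show ?thesis
    by (simp add: frag_unfold)
qed

lemma asr_asl:
  fixes u :: "'x::ab_group_add \<times> ('y::ab_group_add \<times> 'z::ab_group_add \<Rightarrow>\<^sub>0 int) \<Rightarrow>\<^sub>0 int"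
  shows "eqm (tensor B (tensor D E)) (asr (asl u)) u"
proof -
  have "eqm (tensor B (tensor D E)) (frag_extend (\<lambda>k. asr (asl (frag_of k))) u) (frag_extend frag_of u)"
  proof (rule eqm_frag_extend)
    fix k :: "'x \<times> ('y \<times> 'z \<Rightarrow>\<^sub>0 int)"
    obtain x w where k: "k = (x, w)" by (cases k)
    have "asr (asl (frag_of k)) = frag_extend (\<lambda>k. frag_of (x, frag_of k)) w"
      by (simp add: k frag_unfold)
    with tensor_gext_right[of B "tensor D E" x frag_of w]
    show "eqm (tensor B (tensor D E)) (asr (asl (frag_of k))) (frag_of k)"
      by (simp add: k gext_eq_frag_extend tensor_eqm_sym)
  qed
  then show ?thesis
    by (simp add: frag_unfold)
qed

lemma tmap_id_asl: "tmap id h (asl w) = asl (tmap id (tmap id h) w)"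
  by (simp add: frag_unfold)

context
  fixes B :: "('a::ring_1, 'x::ab_group_add) bimod"
  assumes B: "is_bimod B"
begin

lemma bm_l_cong: "eqm B x y \<Longrightarrow> eqm B (bm_l B a x) (bm_l B a y)"
  using B unfolding is_bimod_def by (elim conjE) fast

lemma bm_r_cong: "eqm B x y \<Longrightarrow> eqm B (bm_r B a x) (bm_r B a y)"
  using B unfolding is_bimod_def by (elim conjE) fast

lemma bm_l_add: "eqm B (bm_l B a (x + y)) (bm_l B a x + bm_l B a y)"
  using B unfolding is_bimod_def by (elim conjE) fast

lemma bm_l_add_scalar: "eqm B (bm_l B (a + b) x) (bm_l B a x + bm_l B b x)"
  using B unfolding is_bimod_def by (elim conjE) fast

lemma bm_l_mult: "eqm B (bm_l B (a * b) x) (bm_l B a (bm_l B b x))"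
  using B unfolding is_bimod_def by (elim conjE) fast

lemma bm_l_one: "eqm B (bm_l B 1 x) x"
  using B unfolding is_bimod_def by (elim conjE) fast

lemma bm_r_add: "eqm B (bm_r B a (x + y)) (bm_r B a x + bm_r B a y)"
  using B unfolding is_bimod_def by (elim conjE) fast

lemma bm_r_add_scalar: "eqm B (bm_r B (a + b) x) (bm_r B a x + bm_r B b x)"
  using B unfolding is_bimod_def by (elim conjE) fast

lemma bm_r_mult: "eqm B (bm_r B (a * b) x) (bm_r B b (bm_r B a x))"
  using B unfolding is_bimod_def by (elim conjE) fast

lemma bm_r_one: "eqm B (bm_r B 1 x) x"
  using B unfolding is_bimod_def by (elim conjE) fast

lemma bm_l_bm_r: "eqm B (bm_l B a (bm_r B b x)) (bm_r B b (bm_l B a x))"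
  using B unfolding is_bimod_def by (elim conjE) fast

lemma bm_l_null: "x \<in> bm_null B \<Longrightarrow> eqm B (bm_l B a x) 0"
  by (rule well_defined_null[OF null_subgroup_bimod[OF B]])
    (simp_all add: well_defined_def additive_mod_def bm_l_cong bm_l_add)

lemma bm_r_null: "x \<in> bm_null B \<Longrightarrow> eqm B (bm_r B a x) 0"
  by (rule well_defined_null[OF null_subgroup_bimod[OF B]])
    (simp_all add: well_defined_def additive_mod_def bm_r_cong bm_r_add)

lemma bm_l_zero_scalar: "eqm B (bm_l B 0 x) 0"
  using additive_mod_zero[OF null_subgroup_bimod[OF B], of "\<lambda>a. bm_l B a x"]
  by (simp add: additive_mod_def bm_l_add_scalar)

lemma bm_r_zero_scalar: "eqm B (bm_r B 0 x) 0"
  using additive_mod_zero[OF null_subgroup_bimod[OF B], of "\<lambda>a. bm_r B a x"]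
  by (simp add: additive_mod_def bm_r_add_scalar)

lemma lunit_bilinear: "bilinear (tensor ring_bimod B) B (lunit B)"
proof -
  note null = null_subgroup_bimod[OF B]
  have "well_defined (tensor ring_bimod B) B (lunit B)"
    unfolding lunit_def
  proof (rule gext_well_defined_tensor[OF null]; clarsimp)
    fix a x y
    show "eqm B (bm_l B (bm_r ring_bimod a x) y) (bm_l B x (bm_l B a y))"
      by (simp add: ring_bimod_def bm_l_mult)
  next
    fix x y
    assume "x \<in> bm_null (ring_bimod :: ('a, 'a) bimod)"
    then show "eqm B (bm_l B x y) 0"
      by (simp add: ring_bimod_def bm_l_zero_scalar)
  qed (simp_all add: bm_l_add_scalar bm_l_add bm_l_null)
  moreover have "eqm B (lunit B (bm_l (tensor ring_bimod B) a u)) (bm_l B a (lunit B u))" for a u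
    by (rule additive_mod_eqm_on_generators[OF null])
      (auto simp: additive_mod_def lunit_def frag_extend_add gext_add eqm_refl[OF null]
        bm_l_add ring_bimod_def bm_l_mult)
  moreover have "eqm B (lunit B (bm_r (tensor ring_bimod B) a u)) (bm_r B a (lunit B u))" for a u
    by (rule additive_mod_eqm_on_generators[OF null])
      (auto simp: additive_mod_def lunit_def frag_extend_add gext_add eqm_refl[OF null]
        bm_r_add bm_l_bm_r)
  ultimately show ?thesis
    by (simp add: bilinear_def well_defined_def lunit_def gext_add eqm_refl[OF null])
qed

lemma runit_bilinear: "bilinear (tensor B ring_bimod) B (runit B)"
proof -
  note null = null_subgroup_bimod[OF B]
  have "well_defined (tensor B ring_bimod) B (runit B)"
    unfolding runit_def
  proof (rule gext_well_defined_tensor[OF null]; clarsimp)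
    fix a x y
    show "eqm B (bm_r B y (bm_r B a x)) (bm_r B (bm_l ring_bimod a y) x)"
      using eqm_sym[OF null bm_r_mult[of a y x]] by (simp add: ring_bimod_def)
  next
    fix x y
    assume "y \<in> bm_null (ring_bimod :: ('a, 'a) bimod)"
    then show "eqm B (bm_r B y x) 0"
      by (simp add: ring_bimod_def bm_r_zero_scalar)
  qed (simp_all add: bm_r_add_scalar bm_r_add bm_r_null)
  moreover have "eqm B (runit B (bm_l (tensor B ring_bimod) a u)) (bm_l B a (runit B u))" for a u
    by (rule additive_mod_eqm_on_generators[OF null])
      (auto simp: additive_mod_def runit_def frag_extend_add gext_add eqm_refl[OF null]
        bm_l_add eqm_sym[OF null bm_l_bm_r])
  moreover have "eqm B (runit B (bm_r (tensor B ring_bimod) a u)) (bm_r B a (runit B u))" for a u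
    by (rule additive_mod_eqm_on_generators[OF null])
      (auto simp: additive_mod_def runit_def frag_extend_add gext_add eqm_refl[OF null]
        bm_r_add ring_bimod_def bm_r_mult)
  ultimately show ?thesis
    by (simp add: bilinear_def well_defined_def runit_def gext_add eqm_refl[OF null])
qed

end

lemma lunit_frag_of [simp]: "lunit B (frag_of (a, x)) = bm_l B a x"
  by (simp add: lunit_def)

lemma runit_frag_of [simp]: "runit B (frag_of (x, a)) = bm_r B a x"
  by (simp add: runit_def)

lemma lunit_tensor: "lunit (tensor B D) u = tmap (lunit B) id (asl u)"
  using subset_UNIV[of "Poly_Mapping.keys u"]
proof (induction u rule: frag_induction)
  case (one k) then show ?case by (cases k) (simp add: lunit_def frag_unfold)
qed (simp_all add: lunit_def gext_diff frag_unfold)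

lemma runit_tensor: "runit (tensor B D) u = tmap id (runit D) (asr u)"
  using subset_UNIV[of "Poly_Mapping.keys u"]
proof (induction u rule: frag_induction)
  case (one k) then show ?case by (cases k) (simp add: runit_def frag_unfold)
qed (simp_all add: runit_def gext_diff frag_unfold)

lemma tensor_actions_well_defined:
  assumes B: "is_bimod B" and D: "is_bimod D" and uv: "eqm (tensor B D) u v"
  shows "eqm (tensor B D) (bm_l (tensor B D) a u) (bm_l (tensor B D) a v)"
    and "eqm (tensor B D) (bm_r (tensor B D) a u) (bm_r (tensor B D) a v)"
proof -
  note nB = null_subgroup_bimod[OF B] and nD = null_subgroup_bimod[OF D]
  have "bm_l (tensor B D) a = tmap (bm_l B a) id" "bm_r (tensor B D) a = tmap id (bm_r D a)"
    by (simp_all add: tmap_def)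
  moreover have "right_linear B B (bm_l B a)" "left_linear D D id"
    by (simp_all add: right_linear_def left_linear_def well_defined_def additive_mod_def
        bm_l_cong[OF B] bm_l_add[OF B] bm_l_bm_r[OF B] eqm_refl[OF nD])
  moreover have "right_linear B B id" "left_linear D D (bm_r D a)"
    by (simp_all add: right_linear_def left_linear_def well_defined_def additive_mod_def
        bm_r_cong[OF D] bm_r_add[OF D] eqm_sym[OF nD bm_l_bm_r[OF D]] eqm_refl[OF nB])
  ultimately show "eqm (tensor B D) (bm_l (tensor B D) a u) (bm_l (tensor B D) a v)"
    and "eqm (tensor B D) (bm_r (tensor B D) a u) (bm_r (tensor B D) a v)"
    using tmap_well_defined[OF nB nD] uv unfolding well_defined_def by metis+
qed

lemma tensor_is_bimod:
  assumes B: "is_bimod B" and D: "is_bimod D"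
  shows "is_bimod (tensor B D)"
proof -
  let ?T = "tensor B D"
  have l_add_scalar: "eqm ?T (bm_l ?T (a + b) u) (bm_l ?T a u + bm_l ?T b u)" for a b u
    unfolding tensor_simps frag_extend_add_fun[symmetric]
    by (rule eqm_frag_extend)
      (auto intro: tensor_eqm_trans[OF tensor_eqm_left[OF bm_l_add_scalar[OF B]] tensor_add_left])
  have r_add_scalar: "eqm ?T (bm_r ?T (a + b) u) (bm_r ?T a u + bm_r ?T b u)" for a b u
    unfolding tensor_simps frag_extend_add_fun[symmetric]
    by (rule eqm_frag_extend)
      (auto intro: tensor_eqm_trans[OF tensor_eqm_right[OF bm_r_add_scalar[OF D]] tensor_add_right])
  have l_mult: "eqm ?T (bm_l ?T (a * b) u) (bm_l ?T a (bm_l ?T b u))" for a b u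
    by (simp add: frag_extend_frag_extend case_prod_unfold)
      (intro eqm_frag_extend tensor_eqm_left bm_l_mult[OF B])
  have r_mult: "eqm ?T (bm_r ?T (a * b) u) (bm_r ?T b (bm_r ?T a u))" for a b u
    by (simp add: frag_extend_frag_extend case_prod_unfold)
      (intro eqm_frag_extend tensor_eqm_right bm_r_mult[OF D])
  have l_one: "eqm ?T (bm_l ?T 1 u) u" for u
    using eqm_frag_extend[where B = B and D = D and u = u
        and h = "\<lambda>(x, y). frag_of (bm_l B 1 x, y)" and h' = frag_of]
    by (auto intro: tensor_eqm_left bm_l_one[OF B])
  have r_one: "eqm ?T (bm_r ?T 1 u) u" for u
    using eqm_frag_extend[where B = B and D = D and u = u
        and h = "\<lambda>(x, y). frag_of (x, bm_r D 1 y)" and h' = frag_of]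
    by (auto intro: tensor_eqm_right bm_r_one[OF D])
  show ?thesis
    unfolding is_bimod_def
    using tensor_actions_well_defined[OF B D] l_add_scalar r_add_scalar l_mult r_mult l_one r_one
    by (simp add: zspan.zspan_0 zspan_add_closed zspan_uminus_closed frag_extend_add
        frag_extend_frag_extend case_prod_unfold tensor_eqm_refl)
qed

section \<open>Comparing representatives by flattening\<close>

text \<open>Elements of iterated tensor products that differ only by associators are compared by
  mapping them into free abelian groups on tuples, where they become literally equal.
  \<open>flattening B f F\<close> says that \<open>F\<close> reconstructs every element from its image under \<open>f\<close>.\<close>

definition flattening ::
    "('a, 'x::ab_group_add) bimod \<Rightarrow> ('x \<Rightarrow> 'r \<Rightarrow>\<^sub>0 int) \<Rightarrow> ('r \<Rightarrow> 'x) \<Rightarrow> bool" where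
  "flattening B f F \<longleftrightarrow> (\<forall>u. eqm B u (gext F (f u)))"

definition flat_tensor :: "('x \<Rightarrow> 'r \<Rightarrow>\<^sub>0 int) \<Rightarrow> ('y \<Rightarrow> 's \<Rightarrow>\<^sub>0 int)
    \<Rightarrow> ('x \<times> 'y \<Rightarrow>\<^sub>0 int) \<Rightarrow> ('r \<times> 's \<Rightarrow>\<^sub>0 int)" where
  "flat_tensor f g =
     frag_extend (\<lambda>(x, y). frag_extend (\<lambda>r. frag_extend (\<lambda>s. frag_of (r, s)) (g y)) (f x))"

lemma flattening_frag_of: "null_subgroup B \<Longrightarrow> flattening B frag_of id"
  by (simp add: flattening_def eqm_refl)

lemma flattening_tensor:
  assumes f: "flattening B f F" and g: "flattening D g G"
  shows "flattening (tensor B D) (flat_tensor f g) (\<lambda>(r, s). frag_of (F r, G s))"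
  unfolding flattening_def gext_eq_frag_extend
proof
  fix u
  let ?H = "\<lambda>(r, s). frag_of (F r, G s)"
  show "eqm (tensor B D) u (frag_extend ?H (flat_tensor f g u))"
    using subset_UNIV[of "Poly_Mapping.keys u"]
  proof (induction u rule: frag_induction)
    case zero then show ?case by (simp add: flat_tensor_def tensor_eqm_refl)
  next
    case (one k)
    obtain x y where k: "k = (x, y)" by (cases k)
    have "eqm (tensor B D) (frag_of (x, y)) (frag_of (gext F (f x), y))"
      using f by (intro tensor_eqm_left) (simp add: flattening_def)
    also have "eqm (tensor B D) \<dots> (frag_extend (\<lambda>r. frag_of (F r, y)) (f x))"
      by (rule tensor_gext_left)
    also have "eqm (tensor B D) \<dots> (frag_extend (\<lambda>r. frag_of (F r, gext G (g y))) (f x))"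
      using g by (intro eqm_frag_extend tensor_eqm_right) (simp add: flattening_def)
    also have "eqm (tensor B D) \<dots> (frag_extend (\<lambda>r. frag_extend (\<lambda>s. frag_of (F r, G s)) (g y)) (f x))"
      by (intro eqm_frag_extend tensor_gext_right)
    also have "\<dots> = frag_extend ?H (flat_tensor f g (frag_of k))"
      by (simp add: flat_tensor_def k frag_extend_frag_extend)
    finally show ?case
      by (simp add: k)
  next
    case (diff a b)
    then show ?case
      by (simp add: flat_tensor_def frag_extend_diff tensor_eqm_diff)
  qed
qed

lemma flattening_eqm:
  assumes "null_subgroup B" "flattening B f F" "f u = f v"
  shows "eqm B u v"
  using assms eqm_trans[OF assms(1)] eqm_sym[OF assms(1)] unfolding flattening_def by metis

section \<open>The coring of a cowreath\<close>

definition whisker_right :: "(('x \<times> 'y \<Rightarrow>\<^sub>0 int) \<Rightarrow> ('u \<times> 'v \<Rightarrow>\<^sub>0 int))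
    \<Rightarrow> ('x \<times> ('y \<times> 'z \<Rightarrow>\<^sub>0 int) \<Rightarrow>\<^sub>0 int) \<Rightarrow> ('u \<times> ('v \<times> 'z \<Rightarrow>\<^sub>0 int) \<Rightarrow>\<^sub>0 int)" where
  "whisker_right f = asr \<circ> tmap f id \<circ> asl"

lemmas bilinear_intros = bilinear_comp tmap_bilinear[rotated 2] asr_bilinear asl_bilinear bilinear_id
  null_subgroup_tensor null_subgroup_ring

locale cowreath =
  fixes C :: "('a::ring_1, 'c::ab_group_add) bimod"
    and M :: "('a, 'm::ab_group_add) bimod"
    and \<Delta> :: "'c \<Rightarrow> ('c \<times> 'c \<Rightarrow>\<^sub>0 int)"
    and \<epsilon> :: "'c \<Rightarrow> 'a"
    and mm :: "('c \<times> 'm \<Rightarrow>\<^sub>0 int) \<Rightarrow> ('m \<times> 'c \<Rightarrow>\<^sub>0 int)"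
    and \<xi> :: "('c \<times> 'm \<Rightarrow>\<^sub>0 int) \<Rightarrow> 'c"
    and \<delta> :: "('c \<times> 'm \<Rightarrow>\<^sub>0 int) \<Rightarrow> ('c \<times> ('m \<times> 'm \<Rightarrow>\<^sub>0 int) \<Rightarrow>\<^sub>0 int)"
  assumes coring: "is_coring C \<Delta> \<epsilon>"
    and cowreath: "is_cowreath C \<Delta> \<epsilon> M mm \<xi> \<delta>"
begin

lemma C_bimod: "is_bimod C"
  using coring by (simp add: is_coring_def)

lemma M_bimod: "is_bimod M"
  using cowreath by (simp add: is_cowreath_def in_R_def)

lemma C_null: "null_subgroup C"
  by (rule null_subgroup_bimod[OF C_bimod])

lemma M_null: "null_subgroup M"
  by (rule null_subgroup_bimod[OF M_bimod])

lemma Delta_bilinear: "bilinear C (tensor C C) \<Delta>"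
  using coring by (simp add: is_coring_def)

lemma epsilon_bilinear: "bilinear C ring_bimod \<epsilon>"
  using coring by (simp add: is_coring_def)

lemma m_bilinear: "bilinear (tensor C M) (tensor M C) mm"
  using cowreath by (simp add: is_cowreath_def in_R_def)

lemma xi_bilinear: "bilinear (tensor C M) C \<xi>"
  using cowreath by (simp add: is_cowreath_def)

lemma delta_bilinear: "bilinear (tensor C M) (tensor C (tensor M M)) \<delta>"
  using cowreath by (simp add: is_cowreath_def)

lemmas structure_bilinear = Delta_bilinear epsilon_bilinear m_bilinear xi_bilinear delta_bilinear
  C_null M_null

lemma Delta_coassoc: "eqm (tensor C (tensor C C)) (cm_lco \<Delta> (\<Delta> c)) (tmap id \<Delta> (\<Delta> c))"
  using coring by (simp add: is_coring_def mapeq_def cm_lco_def)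

lemma Delta_counit_left: "eqm C (lunit C (tmap \<epsilon> id (\<Delta> c))) c"
  using coring by (simp add: is_coring_def mapeq_def)

lemma Delta_counit_right: "eqm C (runit C (tmap id \<epsilon> (\<Delta> c))) c"
  using coring by (simp add: is_coring_def mapeq_def)

lemma m_Delta:
  "eqm (tensor (tensor M C) C) (asl (tmap id \<Delta> (mm x))) (tmap mm id (asl (tmap id mm (cm_lco \<Delta> x))))"
  using cowreath by (simp add: is_cowreath_def in_R_def mapeq_def cm_lco_def)

lemma m_epsilon: "eqm M (runit M (tmap id \<epsilon> (mm x))) (lunit M (tmap \<epsilon> id x))"
  using cowreath by (simp add: is_cowreath_def in_R_def mapeq_def)

lemma xi_left_colinear: "eqm (tensor C C) (\<Delta> (\<xi> x)) (tmap id \<xi> (cm_lco \<Delta> x))"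
  using cowreath by (simp add: is_cowreath_def mapeq_def)

lemma xi_right_colinear: "eqm (tensor C C) (\<Delta> (\<xi> x)) (tmap \<xi> id (asl (tmap id mm (cm_lco \<Delta> x))))"
  using cowreath by (simp add: is_cowreath_def mapeq_def cm_rco_def cm_lco_def)

lemma delta_left_colinear:
  "eqm (tensor C (tensor C (tensor M M))) (cm_lco \<Delta> (\<delta> x)) (tmap id \<delta> (cm_lco \<Delta> x))"
  using cowreath by (simp add: is_cowreath_def mapeq_def)

lemma delta_right_colinear:
  "eqm (tensor (tensor C (tensor M M)) C) (cmm_rco \<Delta> mm (\<delta> x)) (tmap \<delta> id (cm_rco \<Delta> mm x))"
  using cowreath by (simp add: is_cowreath_def mapeq_def)

lemma delta_counit_left: "eqm (tensor C M) (tmap \<xi> id (asl (\<delta> x))) x"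
  using cowreath by (simp add: is_cowreath_def mapeq_def)

lemma delta_counit_right: "eqm (tensor M C) (tmap id \<xi> (whisker_right mm (\<delta> x))) (mm x)"
  using cowreath by (simp add: is_cowreath_def mapeq_def whisker_right_def)

lemma delta_coassoc:
  "eqm (tensor M (tensor C (tensor M M)))
     (whisker_right mm (tmap id asr (whisker_right \<delta> (\<delta> x))))
     (tmap id \<delta> (whisker_right mm (\<delta> x)))"
  using cowreath by (simp add: is_cowreath_def mapeq_def whisker_right_def)

lemma C_flattening: "flattening C frag_of id"
  by (rule flattening_frag_of[OF C_null])

lemma M_flattening: "flattening M frag_of id"
  by (rule flattening_frag_of[OF M_null])

lemma cm_lco_bilinear: "null_subgroup Y \<Longrightarrow> bilinear (tensor C Y) (tensor C (tensor C Y)) (cm_lco \<Delta>)"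
  unfolding cm_lco_def by (rule bilinear_intros structure_bilinear | assumption)+

lemma whisker_m_bilinear:
  "null_subgroup Y \<Longrightarrow> bilinear (tensor C (tensor M Y)) (tensor M (tensor C Y)) (whisker_right mm)"
  unfolding whisker_right_def by (rule bilinear_intros structure_bilinear | assumption)+

lemma whisker_delta_bilinear:
  "null_subgroup Y \<Longrightarrow> bilinear (tensor C (tensor M Y)) (tensor C (tensor (tensor M M) Y)) (whisker_right \<delta>)"
  unfolding whisker_right_def by (rule bilinear_intros structure_bilinear | assumption)+

lemmas cowreath_bilinear = structure_bilinear cm_lco_bilinear whisker_m_bilinear whisker_delta_bilinear

lemma cw_comult_bilinear: "bilinear (tensor C M) (tensor (tensor C M) (tensor C M)) (cw_comult \<Delta> mm \<delta>)"
  unfolding cw_comult_def by (rule bilinear_intros cowreath_bilinear | assumption)+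

lemma cw_comult_unfold: "cw_comult \<Delta> mm \<delta> x = asl (tmap id (whisker_right mm) (tmap id \<delta> (cm_lco \<Delta> x)))"
  by (simp add: cw_comult_def whisker_right_def cm_lco_def)

lemma cw_comult_delta_first:
  "eqm (tensor (tensor C M) (tensor C M)) (cw_comult \<Delta> mm \<delta> x) (asl (tmap id (whisker_right mm) (cm_lco \<Delta> (\<delta> x))))"
proof -
  have "bilinear (tensor C (tensor C (tensor M M))) (tensor (tensor C M) (tensor C M))
      (asl \<circ> tmap id (whisker_right mm))"
    by (rule bilinear_intros cowreath_bilinear | assumption)+
  from bilinear_eqm[OF this tensor_eqm_sym[OF delta_left_colinear]] show ?thesis
    by (simp add: cw_comult_unfold)
qed

lemma xi_comult_reassoc:
  "eqm (tensor (tensor C C) M)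
     (asl (tmap \<xi> id (asl (tmap id (whisker_right mm) (cm_lco \<Delta> y)))))
     (tmap (tmap \<xi> id \<circ> asl \<circ> tmap id mm \<circ> cm_lco \<Delta>) id (asl y))"
  by (rule flattening_eqm[OF null_subgroup_tensor
        flattening_tensor[OF flattening_tensor[OF C_flattening C_flattening] M_flattening]])
    (simp add: frag_unfold flat_tensor_def cm_lco_def whisker_right_def, subst frag_extend_swap, rule refl)

lemma xi_tensor_comult: "eqm (tensor (tensor C C) M) (asl (tmap \<xi> id (cw_comult \<Delta> mm \<delta> x))) (tmap \<Delta> id x)"
proof -
  have "bilinear (tensor (tensor C M) (tensor C M)) (tensor (tensor C C) M) (asl \<circ> tmap \<xi> id)"
    by (rule bilinear_intros cowreath_bilinear | assumption)+
  from bilinear_eqm[OF this cw_comult_delta_first]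
  have "eqm (tensor (tensor C C) M) (asl (tmap \<xi> id (cw_comult \<Delta> mm \<delta> x)))
      (asl (tmap \<xi> id (asl (tmap id (whisker_right mm) (cm_lco \<Delta> (\<delta> x))))))"
    by simp
  also have "eqm (tensor (tensor C C) M) \<dots> (tmap (tmap \<xi> id \<circ> asl \<circ> tmap id mm \<circ> cm_lco \<Delta>) id (asl (\<delta> x)))"
    by (rule xi_comult_reassoc)
  also have "eqm (tensor (tensor C C) M) \<dots> (tmap (\<Delta> \<circ> \<xi>) id (asl (\<delta> x)))"
    by (rule tmap_cong_left) (simp add: tensor_eqm_sym[OF xi_right_colinear])
  also have "\<dots> = tmap \<Delta> id (tmap \<xi> id (asl (\<delta> x)))"
    by (simp add: tmap_comp)
  also have "eqm (tensor (tensor C C) M) \<dots> (tmap \<Delta> id x)"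
    by (rule bilinear_eqm[OF _ delta_counit_left]) (rule bilinear_intros cowreath_bilinear)+
  finally show ?thesis .
qed

lemma xi_comult: "eqm (tensor C C) (tmap \<xi> \<xi> (cw_comult \<Delta> mm \<delta> x)) (\<Delta> (\<xi> x))"
proof -
  have "bilinear (tensor C (tensor C M)) (tensor C C) (tmap id \<xi>)"
    by (rule bilinear_intros cowreath_bilinear)+
  note tmap_xi = bilinear_eqm[OF this]
  have "tmap \<xi> \<xi> (cw_comult \<Delta> mm \<delta> x) = tmap id \<xi> (tmap \<xi> id (cw_comult \<Delta> mm \<delta> x))"
    by (simp add: tmap_comp)
  also have "eqm (tensor C C) \<dots> (tmap id \<xi> (asr (asl (tmap \<xi> id (cw_comult \<Delta> mm \<delta> x)))))"
    by (rule tmap_xi[OF tensor_eqm_sym[OF asr_asl]])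
  also have "eqm (tensor C C) \<dots> (tmap id \<xi> (asr (tmap \<Delta> id x)))"
    by (rule tmap_xi[OF bilinear_eqm[OF asr_bilinear xi_tensor_comult]])
  also have "eqm (tensor C C) \<dots> (\<Delta> (\<xi> x))"
    using tensor_eqm_sym[OF xi_left_colinear] by (simp add: cm_lco_def)
  finally show ?thesis .
qed

lemma comult_counit_left: "eqm (tensor C M) (lunit (tensor C M) (tmap (\<epsilon> \<circ> \<xi>) id (cw_comult \<Delta> mm \<delta> x))) x"
proof -
  have "bilinear (tensor (tensor C C) M) (tensor C M) (tmap (lunit C \<circ> tmap \<epsilon> id) id)"
    by (rule bilinear_intros cowreath_bilinear lunit_bilinear[OF C_bimod] | assumption)+
  note counit_tmap = bilinear_eqm[OF this]
  have "lunit (tensor C M) (tmap (\<epsilon> \<circ> \<xi>) id (cw_comult \<Delta> mm \<delta> x))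
      = tmap (lunit C \<circ> tmap \<epsilon> id) id (asl (tmap \<xi> id (cw_comult \<Delta> mm \<delta> x)))"
    by (simp add: lunit_tensor frag_unfold)
  also have "eqm (tensor C M) \<dots> (tmap (lunit C \<circ> tmap \<epsilon> id) id (tmap \<Delta> id x))"
    by (rule counit_tmap[OF xi_tensor_comult])
  also have "\<dots> = tmap (lunit C \<circ> tmap \<epsilon> id \<circ> \<Delta>) id x"
    by (simp add: tmap_comp comp_assoc)
  also have "eqm (tensor C M) \<dots> (tmap id id x)"
    by (rule tmap_cong_left) (simp add: Delta_counit_left)
  also have "\<dots> = x"
    by simp
  finally show ?thesis .
qed

lemma whisker_delta_counit:
  "eqm M (runit M (tmap id (\<epsilon> \<circ> \<xi>) (whisker_right mm (\<delta> z)))) (lunit M (tmap \<epsilon> id z))"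
proof -
  have "bilinear (tensor M C) M (runit M \<circ> tmap id \<epsilon>)"
    by (rule bilinear_intros cowreath_bilinear runit_bilinear[OF M_bimod] | assumption)+
  from bilinear_eqm[OF this delta_counit_right]
  have "eqm M (runit M (tmap id (\<epsilon> \<circ> \<xi>) (whisker_right mm (\<delta> z)))) (runit M (tmap id \<epsilon> (mm z)))"
    by (simp add: tmap_comp)
  then show ?thesis
    using m_epsilon eqm_trans[OF M_null] by blast
qed

text \<open>The right counit law of \<open>\<Delta>\<close>, moved across the balanced tensor product.\<close>

lemma Delta_counit_right_balanced: "eqm (tensor C M) (tmap id (lunit M \<circ> tmap \<epsilon> id) (cm_lco \<Delta> x)) x"
proof -
  let ?F = "\<lambda>x. tmap id (lunit M \<circ> tmap \<epsilon> id) (cm_lco \<Delta> x)"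
  have "eqm (tensor C M) (?F x) (id x)"
  proof (rule additive_mod_eqm_on_generators[OF null_subgroup_tensor, where F = ?F and G = id])
    show "additive_mod (tensor C M) ?F"
      by (simp add: additive_mod_def cm_lco_def frag_unfold tensor_eqm_refl)
    show "additive_mod (tensor C M) id"
      by (simp add: additive_mod_def tensor_eqm_refl)
  next
    fix k :: "'c \<times> 'm"
    obtain c m where k: "k = (c, m)" by (cases k)
    have "eqm (tensor C M) (frag_of (c, m)) (frag_of (runit C (tmap id \<epsilon> (\<Delta> c)), m))"
      by (rule tensor_eqm_left) (rule eqm_sym[OF C_null Delta_counit_right])
    also have "runit C (tmap id \<epsilon> (\<Delta> c)) = gext (\<lambda>k. bm_r C (\<epsilon> (snd k)) (fst k)) (\<Delta> c)"
      by (simp add: runit_def tmap_def gext_frag_extend case_prod_unfold)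
    also have "eqm (tensor C M) (frag_of (gext (\<lambda>k. bm_r C (\<epsilon> (snd k)) (fst k)) (\<Delta> c), m))
        (frag_extend (\<lambda>k. frag_of (bm_r C (\<epsilon> (snd k)) (fst k), m)) (\<Delta> c))"
      by (rule tensor_gext_left)
    also have "eqm (tensor C M) \<dots> (frag_extend (\<lambda>k. frag_of (fst k, bm_l M (\<epsilon> (snd k)) m)) (\<Delta> c))"
      by (intro eqm_frag_extend tensor_balanced)
    also have "\<dots> = ?F (frag_of k)"
      by (simp add: k cm_lco_def frag_unfold)
    finally show "eqm (tensor C M) (?F (frag_of k)) (id (frag_of k))"
      by (simp add: k tensor_eqm_sym)
  qed
  then show ?thesis
    by simp
qed

lemma comult_counit_right: "eqm (tensor C M) (runit (tensor C M) (tmap id (\<epsilon> \<circ> \<xi>) (cw_comult \<Delta> mm \<delta> x))) x"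
proof -
  define V where "V = tmap id (whisker_right mm) (tmap id \<delta> (cm_lco \<Delta> x))"
  have "bilinear (tensor C (tensor M ring_bimod)) (tensor C M) (tmap id (runit M))"
    by (rule bilinear_intros cowreath_bilinear runit_bilinear[OF M_bimod] | assumption)+
  have "runit (tensor C M) (tmap id (\<epsilon> \<circ> \<xi>) (cw_comult \<Delta> mm \<delta> x))
      = tmap id (runit M) (asr (asl (tmap id (tmap id (\<epsilon> \<circ> \<xi>)) V)))"
    by (simp add: cw_comult_unfold V_def runit_tensor tmap_id_asl)
  also have "eqm (tensor C M) \<dots> (tmap id (runit M) (tmap id (tmap id (\<epsilon> \<circ> \<xi>)) V))"
    by (rule bilinear_eqm[OF \<open>bilinear _ _ (tmap id (runit M))\<close> asr_asl])
  also have "\<dots> = tmap id (runit M \<circ> tmap id (\<epsilon> \<circ> \<xi>) \<circ> whisker_right mm \<circ> \<delta>) (cm_lco \<Delta> x)"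
    by (simp add: V_def tmap_comp comp_assoc)
  also have "eqm (tensor C M) \<dots> (tmap id (lunit M \<circ> tmap \<epsilon> id) (cm_lco \<Delta> x))"
    by (rule tmap_cong_right) (simp add: whisker_delta_counit)
  also have "eqm (tensor C M) \<dots> x"
    by (rule Delta_counit_right_balanced)
  finally show ?thesis .
qed

lemma cm_lco_coassoc:
  fixes Y :: "('a, 'y::ab_group_add) bimod"
  shows "eqm (tensor C (tensor C (tensor C Y))) (cm_lco \<Delta> (cm_lco \<Delta> x)) (tmap id (cm_lco \<Delta>) (cm_lco \<Delta> x))"
proof (rule additive_mod_eqm_on_generators[OF null_subgroup_tensor,
      where F = "\<lambda>x. cm_lco \<Delta> (cm_lco \<Delta> x)" and G = "\<lambda>x. tmap id (cm_lco \<Delta>) (cm_lco \<Delta> x)"])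
  show "additive_mod (tensor C (tensor C (tensor C Y))) (\<lambda>x. cm_lco \<Delta> (cm_lco \<Delta> x))"
    by (simp add: additive_mod_def cm_lco_def frag_unfold tensor_eqm_refl)
  show "additive_mod (tensor C (tensor C (tensor C Y))) (\<lambda>x. tmap id (cm_lco \<Delta>) (cm_lco \<Delta> x))"
    by (simp add: additive_mod_def cm_lco_def frag_unfold tensor_eqm_refl)
next
  fix k :: "'c \<times> 'y"
  obtain c t where k: "k = (c, t)" by (cases k)
  let ?P = "tmap id (tmap id (\<lambda>c. frag_of (c, t)))"
  have "left_linear (tensor C C) (tensor C (tensor C Y)) (tmap id (\<lambda>c. frag_of (c, t)))"
    by (rule tmap_left_linear[OF C_null null_subgroup_tensor bilinear_id[OF C_null] frag_of_pair_left_linear])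
  moreover have "right_linear C C id"
    using bilinear_id[OF C_null] by (simp add: bilinear_iff_right_left_linear)
  ultimately have "well_defined (tensor C (tensor C C)) (tensor C (tensor C (tensor C Y))) ?P"
    by (intro tmap_well_defined[OF C_null null_subgroup_tensor])
  then have "eqm (tensor C (tensor C (tensor C Y))) (?P (cm_lco \<Delta> (\<Delta> c))) (?P (tmap id \<Delta> (\<Delta> c)))"
    using Delta_coassoc unfolding well_defined_def by blast
  then show "eqm (tensor C (tensor C (tensor C Y)))
      (cm_lco \<Delta> (cm_lco \<Delta> (frag_of k))) (tmap id (cm_lco \<Delta>) (cm_lco \<Delta> (frag_of k)))"
    by (simp add: k cm_lco_def frag_unfold)
qed

lemma m_Delta_whisker:
  "eqm (tensor M (tensor C C)) (tmap id \<Delta> (mm z)) (whisker_right mm (tmap id mm (cm_lco \<Delta> z)))"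
proof -
  have "eqm (tensor M (tensor C C)) (tmap id \<Delta> (mm z)) (asr (asl (tmap id \<Delta> (mm z))))"
    by (rule tensor_eqm_sym[OF asr_asl])
  also have "eqm (tensor M (tensor C C)) \<dots> (whisker_right mm (tmap id mm (cm_lco \<Delta> z)))"
    using bilinear_eqm[OF asr_bilinear m_Delta] by (simp add: whisker_right_def)
  finally show ?thesis .
qed

lemma delta_right_colinear_whisker:
  "eqm (tensor C (tensor M (tensor M C)))
     (tmap id (tmap id mm \<circ> whisker_right mm) (cm_lco \<Delta> (\<delta> z)))
     (tmap id asr (whisker_right \<delta> (tmap id mm (cm_lco \<Delta> z))))"
proof -
  let ?T = "tensor C (tensor M (tensor M C))"
  define V where "V = tmap id (tmap id mm \<circ> whisker_right mm) (cm_lco \<Delta> (\<delta> z))"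
  have "bilinear (tensor (tensor C (tensor M M)) C) ?T (tmap id asr \<circ> asr)"
    by (rule bilinear_intros cowreath_bilinear | assumption)+
  note reassoc = bilinear_eqm[OF this]
  have "V = tmap id id V"
    by simp
  also have "eqm ?T \<dots> (tmap id (asr \<circ> asl) V)"
    by (rule tmap_cong_right) (simp add: tensor_eqm_sym[OF asr_asl])
  also have "\<dots> = tmap id asr (tmap id asl V)"
    by (simp add: tmap_comp)
  also have "eqm ?T \<dots> (tmap id asr (asr (asl (tmap id asl V))))"
    by (rule bilinear_eqm[OF _ tensor_eqm_sym[OF asr_asl]]) (rule bilinear_intros cowreath_bilinear)+
  also have "\<dots> = (tmap id asr \<circ> asr) (cmm_rco \<Delta> mm (\<delta> z))"
    by (simp add: V_def cmm_rco_def whisker_right_def cm_lco_def tmap_comp)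
  also have "eqm ?T \<dots> ((tmap id asr \<circ> asr) (tmap \<delta> id (cm_rco \<Delta> mm z)))"
    by (rule reassoc[OF delta_right_colinear])
  also have "\<dots> = tmap id asr (whisker_right \<delta> (tmap id mm (cm_lco \<Delta> z)))"
    by (simp add: cm_rco_def whisker_right_def cm_lco_def)
  finally show ?thesis
    by (simp add: V_def)
qed

lemma coassoc_rhs_expand:
  "eqm (tensor (tensor C M) (tensor (tensor C M) (tensor C M)))
     (tmap id (cw_comult \<Delta> mm \<delta>) (cw_comult \<Delta> mm \<delta> x))
     (asl (tmap id (tmap id (asl \<circ> tmap id (whisker_right mm) \<circ> cm_lco \<Delta>) \<circ> tmap id \<delta> \<circ> whisker_right mm \<circ> \<delta>)
        (cm_lco \<Delta> x)))"
  (is "eqm ?T _ _")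
proof -
  let ?D = "cw_comult \<Delta> mm \<delta>" and ?W = "whisker_right mm"
  let ?E = "asl \<circ> tmap id ?W \<circ> cm_lco \<Delta>"
  have outer: "bilinear (tensor (tensor C M) (tensor C M)) ?T (tmap id ?D)"
    by (rule bilinear_intros cowreath_bilinear cw_comult_bilinear | assumption)+
  have inner: "bilinear (tensor C (tensor C (tensor M M))) ?T (asl \<circ> tmap id (tmap id (?E \<circ> \<delta>) \<circ> ?W))"
    by (rule bilinear_intros cowreath_bilinear | assumption)+
  have "eqm ?T (tmap id ?D (?D x)) (tmap id ?D (asl (tmap id ?W (cm_lco \<Delta> (\<delta> x)))))"
    by (rule bilinear_eqm[OF outer cw_comult_delta_first])
  also have "eqm ?T \<dots> (tmap id (?E \<circ> \<delta>) (asl (tmap id ?W (cm_lco \<Delta> (\<delta> x)))))"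
    by (rule tmap_cong_right) (simp add: cw_comult_delta_first)
  also have "\<dots> = asl (tmap id (tmap id (?E \<circ> \<delta>) \<circ> ?W) (cm_lco \<Delta> (\<delta> x)))"
    by (simp add: tmap_id_asl tmap_comp)
  also have "eqm ?T \<dots> (asl (tmap id (tmap id (?E \<circ> \<delta>) \<circ> ?W) (tmap id \<delta> (cm_lco \<Delta> x))))"
    using bilinear_eqm[OF inner delta_left_colinear] by simp
  also have "\<dots> = asl (tmap id (tmap id ?E \<circ> tmap id \<delta> \<circ> ?W \<circ> \<delta>) (cm_lco \<Delta> x))"
    by (simp only: tmap_id_comp comp_assoc comp_apply)
  finally show ?thesis .
qed

lemma coassoc_rhs_normal_form:
  "eqm (tensor (tensor C M) (tensor (tensor C M) (tensor C M)))
     (tmap id (cw_comult \<Delta> mm \<delta>) (cw_comult \<Delta> mm \<delta> x))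
     (asl (tmap id (tmap id (asl \<circ> tmap id (whisker_right mm)) \<circ> tmap id asr \<circ> asr
          \<circ> tmap (whisker_right mm \<circ> tmap id mm \<circ> cm_lco \<Delta>) id \<circ> asl \<circ> tmap id asr \<circ> whisker_right \<delta>)
        (cm_lco \<Delta> (\<delta> x))))"
  (is "eqm ?T _ _")
proof -
  let ?W = "whisker_right mm" and ?Wd = "tmap id asr \<circ> whisker_right \<delta>"
  let ?E = "asl \<circ> tmap id ?W \<circ> cm_lco \<Delta>"
  let ?R = "tmap id (asl \<circ> tmap id ?W) \<circ> tmap id asr \<circ> asr"
  have E: "bilinear (tensor M (tensor C (tensor M M))) (tensor M (tensor (tensor C M) (tensor C M)))
      (tmap id ?E)"
    by (rule bilinear_intros cowreath_bilinear | assumption)+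
  have outer: "bilinear (tensor C (tensor C (tensor M M))) ?T (asl \<circ> tmap id (tmap id ?E \<circ> ?W \<circ> ?Wd))"
    by (rule bilinear_intros cowreath_bilinear | assumption)+
  have R: "bilinear (tensor (tensor M (tensor C C)) (tensor M M))
      (tensor M (tensor (tensor C M) (tensor C M))) ?R"
    by (rule bilinear_intros cowreath_bilinear | assumption)+
  have reassoc: "tmap id ?E \<circ> ?W = ?R \<circ> tmap (tmap id \<Delta> \<circ> mm) id \<circ> asl"
    by (rule ext) (simp add: frag_unfold cm_lco_def whisker_right_def)
  have "eqm ?T (tmap id (cw_comult \<Delta> mm \<delta>) (cw_comult \<Delta> mm \<delta> x))
      (asl (tmap id (tmap id ?E \<circ> tmap id \<delta> \<circ> ?W \<circ> \<delta>) (cm_lco \<Delta> x)))"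
    by (rule coassoc_rhs_expand)
  also have "eqm ?T \<dots> (asl (tmap id (tmap id ?E \<circ> ?W \<circ> ?Wd \<circ> \<delta>) (cm_lco \<Delta> x)))"
    using bilinear_eqm[OF E tensor_eqm_sym[OF delta_coassoc]]
    by (intro bilinear_eqm[OF asl_bilinear] tmap_cong_right) simp
  also have "\<dots> = asl (tmap id (tmap id ?E \<circ> ?W \<circ> ?Wd) (tmap id \<delta> (cm_lco \<Delta> x)))"
    by (simp add: tmap_comp comp_assoc)
  also have "eqm ?T \<dots> (asl (tmap id (tmap id ?E \<circ> ?W \<circ> ?Wd) (cm_lco \<Delta> (\<delta> x))))"
    using bilinear_eqm[OF outer tensor_eqm_sym[OF delta_left_colinear]] by simp
  also have "\<dots> = asl (tmap id (?R \<circ> tmap (tmap id \<Delta> \<circ> mm) id \<circ> asl \<circ> ?Wd) (cm_lco \<Delta> (\<delta> x)))"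
    by (simp only: reassoc)
  also have "eqm ?T \<dots>
      (asl (tmap id (?R \<circ> tmap (?W \<circ> tmap id mm \<circ> cm_lco \<Delta>) id \<circ> asl \<circ> ?Wd) (cm_lco \<Delta> (\<delta> x))))"
    using bilinear_eqm[OF R
        tmap_cong_left[where f = "tmap id \<Delta> \<circ> mm" and f' = "?W \<circ> tmap id mm \<circ> cm_lco \<Delta>"]]
    by (intro bilinear_eqm[OF asl_bilinear] tmap_cong_right) (simp add: m_Delta_whisker)
  finally show ?thesis
    by (simp only: comp_assoc)
qed

lemma coassoc_lhs_expand:
  "eqm (tensor (tensor C M) (tensor (tensor C M) (tensor C M)))
     (asr (tmap (cw_comult \<Delta> mm \<delta>) id (cw_comult \<Delta> mm \<delta> x)))
     (asr (tmap (asl \<circ> tmap id (whisker_right mm \<circ> \<delta>) \<circ> asr) id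
        (asl (tmap id (whisker_right mm) (asl (tmap id (cm_lco \<Delta>) (cm_lco \<Delta> (\<delta> x))))))))"
  (is "eqm ?T _ _")
proof -
  let ?W = "whisker_right mm" and ?L = "cm_lco \<Delta>"
  let ?K = "asr \<circ> tmap (asl \<circ> tmap id (?W \<circ> \<delta>) \<circ> asr) id \<circ> asl"
  have K1: "bilinear (tensor (tensor C C) (tensor C M)) ?T (?K \<circ> tmap id (?W \<circ> \<delta>))"
    by (rule bilinear_intros cowreath_bilinear | assumption)+
  have K2: "bilinear (tensor C (tensor C (tensor C M))) ?T (?K \<circ> tmap id (?W \<circ> \<delta>) \<circ> asl)"
    by (rule bilinear_intros cowreath_bilinear | assumption)+
  have K3: "bilinear (tensor C (tensor C (tensor C (tensor M M)))) ?T (?K \<circ> tmap id ?W \<circ> asl)"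
    by (rule bilinear_intros cowreath_bilinear | assumption)+
  have K4: "bilinear (tensor C (tensor C (tensor M M))) ?T (?K \<circ> tmap id ?W \<circ> asl \<circ> tmap id ?L)"
    by (rule bilinear_intros cowreath_bilinear | assumption)+
  have "asr (tmap (cw_comult \<Delta> mm \<delta>) id (cw_comult \<Delta> mm \<delta> x))
      = ?K (tmap id (?W \<circ> \<delta>) (tmap \<Delta> id (?L x)))"
    by (simp add: frag_unfold cw_comult_def cm_lco_def whisker_right_def)
  also have "eqm ?T \<dots> (?K (tmap id (?W \<circ> \<delta>) (asl (?L (?L x)))))"
    using bilinear_eqm[OF K1 tensor_eqm_sym[OF asl_asr]] by (simp add: cm_lco_def)
  also have "eqm ?T \<dots> (?K (tmap id (?W \<circ> \<delta>) (asl (tmap id ?L (?L x)))))"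
    using bilinear_eqm[OF K2 cm_lco_coassoc] by simp
  also have "\<dots> = ?K (tmap id ?W (asl (tmap id (tmap id \<delta> \<circ> ?L) (?L x))))"
    by (simp add: frag_unfold)
  also have "eqm ?T \<dots> (?K (tmap id ?W (asl (tmap id (?L \<circ> \<delta>) (?L x)))))"
    using bilinear_eqm[OF K3 tmap_cong_right[where g = "tmap id \<delta> \<circ> ?L" and g' = "?L \<circ> \<delta>"]]
    by (simp add: tensor_eqm_sym[OF delta_left_colinear])
  also have "\<dots> = ?K (tmap id ?W (asl (tmap id ?L (tmap id \<delta> (?L x)))))"
    by (simp add: tmap_comp)
  also have "eqm ?T \<dots> (?K (tmap id ?W (asl (tmap id ?L (?L (\<delta> x))))))"
    using bilinear_eqm[OF K4 tensor_eqm_sym[OF delta_left_colinear]] by simp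
  finally show ?thesis
    by (simp only: comp_apply)
qed

lemmas CM_flattening = flattening_tensor[OF C_flattening M_flattening]
lemmas CM3_flattening = flattening_tensor[OF CM_flattening flattening_tensor[OF CM_flattening CM_flattening]]

lemma coassoc_lhs_reassoc:
  "eqm (tensor (tensor C M) (tensor (tensor C M) (tensor C M)))
     (asr (tmap (asl \<circ> tmap id (whisker_right mm \<circ> \<delta>) \<circ> asr) id
        (asl (tmap id (whisker_right mm) (asl (tmap id (cm_lco \<Delta>) (cm_lco \<Delta> y)))))))
     ((tmap id asl \<circ> asl \<circ> tmap id (whisker_right mm))
        (tmap id (tmap id (tmap id asr) \<circ> tmap id asr \<circ> asr
            \<circ> tmap (tmap id asr \<circ> whisker_right \<delta> \<circ> tmap id mm \<circ> cm_lco \<Delta>) id \<circ> asl)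
          (cm_lco \<Delta> y)))"
  by (rule flattening_eqm[OF null_subgroup_tensor CM3_flattening])
    (simp add: frag_unfold flat_tensor_def cm_lco_def whisker_right_def, subst frag_extend_swap, rule refl)

lemma coassoc_normal_forms:
  "eqm (tensor (tensor C M) (tensor (tensor C M) (tensor C M)))
     ((tmap id asl \<circ> asl \<circ> tmap id (whisker_right mm))
        (tmap id (tmap id (tmap id asr) \<circ> tmap id asr \<circ> asr
            \<circ> tmap (tmap id (tmap id mm \<circ> whisker_right mm) \<circ> cm_lco \<Delta> \<circ> \<delta>) id \<circ> asl)
          (cm_lco \<Delta> y)))
     (asl (tmap id (tmap id (asl \<circ> tmap id (whisker_right mm)) \<circ> tmap id asr \<circ> asr
          \<circ> tmap (whisker_right mm \<circ> tmap id mm \<circ> cm_lco \<Delta>) id \<circ> asl \<circ> tmap id asr \<circ> whisker_right \<delta>)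
        (cm_lco \<Delta> y)))"
  by (rule flattening_eqm[OF null_subgroup_tensor CM3_flattening])
    (simp add: frag_unfold flat_tensor_def cm_lco_def whisker_right_def, subst (2) frag_extend_swap, rule refl)

lemma coassoc_lhs_normal_form:
  "eqm (tensor (tensor C M) (tensor (tensor C M) (tensor C M)))
     (asr (tmap (cw_comult \<Delta> mm \<delta>) id (cw_comult \<Delta> mm \<delta> x)))
     ((tmap id asl \<circ> asl \<circ> tmap id (whisker_right mm))
        (tmap id (tmap id (tmap id asr) \<circ> tmap id asr \<circ> asr
            \<circ> tmap (tmap id (tmap id mm \<circ> whisker_right mm) \<circ> cm_lco \<Delta> \<circ> \<delta>) id \<circ> asl)
          (cm_lco \<Delta> (\<delta> x))))"
  (is "eqm ?T _ _")
proof -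
  let ?A = "tmap id (tmap id asr) \<circ> tmap id asr \<circ> asr"
  have A: "bilinear (tensor (tensor C (tensor M (tensor M C))) M)
      (tensor C (tensor M (tensor M (tensor C M)))) ?A"
    by (rule bilinear_intros cowreath_bilinear | assumption)+
  have K: "bilinear (tensor C (tensor C (tensor M (tensor M (tensor C M))))) ?T
      (tmap id asl \<circ> asl \<circ> tmap id (whisker_right mm))"
    by (rule bilinear_intros cowreath_bilinear | assumption)+
  note coassoc_lhs_expand
  also note coassoc_lhs_reassoc
  also have "eqm ?T
      ((tmap id asl \<circ> asl \<circ> tmap id (whisker_right mm)) (tmap id (?A
         \<circ> tmap (tmap id asr \<circ> whisker_right \<delta> \<circ> tmap id mm \<circ> cm_lco \<Delta>) id \<circ> asl) (cm_lco \<Delta> (\<delta> x))))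
      ((tmap id asl \<circ> asl \<circ> tmap id (whisker_right mm)) (tmap id (?A
         \<circ> tmap (tmap id (tmap id mm \<circ> whisker_right mm) \<circ> cm_lco \<Delta> \<circ> \<delta>) id \<circ> asl) (cm_lco \<Delta> (\<delta> x))))"
    using bilinear_eqm[OF A
        tmap_cong_left[where f = "tmap id asr \<circ> whisker_right \<delta> \<circ> tmap id mm \<circ> cm_lco \<Delta>"
          and f' = "tmap id (tmap id mm \<circ> whisker_right mm) \<circ> cm_lco \<Delta> \<circ> \<delta>"]]
    by (intro bilinear_eqm[OF K] tmap_cong_right)
      (simp add: tensor_eqm_sym[OF delta_right_colinear_whisker])
  finally show ?thesis
    by (simp only: comp_assoc)
qed

lemma cw_comult_coassoc:
  "eqm (tensor (tensor C M) (tensor (tensor C M) (tensor C M)))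
     (asr (tmap (cw_comult \<Delta> mm \<delta>) id (cw_comult \<Delta> mm \<delta> x)))
     (tmap id (cw_comult \<Delta> mm \<delta>) (cw_comult \<Delta> mm \<delta> x))"
  using coassoc_lhs_normal_form coassoc_normal_forms tensor_eqm_sym[OF coassoc_rhs_normal_form]
  by (rule tensor_eqm_trans[OF tensor_eqm_trans])

lemma tensor_is_coring: "is_coring (tensor C M) (cw_comult \<Delta> mm \<delta>) (\<epsilon> \<circ> \<xi>)"
proof -
  have "bilinear (tensor C M) ring_bimod (\<epsilon> \<circ> \<xi>)"
    by (rule bilinear_intros cowreath_bilinear)+
  then show ?thesis
    unfolding is_coring_def mapeq_def
    using tensor_is_bimod[OF C_bimod M_bimod] cw_comult_bilinear cw_comult_coassoc
      comult_counit_left comult_counit_right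
    by simp
qed

lemma xi_coring_morph: "coring_morph (tensor C M) C \<xi> (cw_comult \<Delta> mm \<delta>) (\<epsilon> \<circ> \<xi>) \<Delta> \<epsilon>"
  unfolding coring_morph_def mapeq_def using xi_bilinear xi_comult by simp

end

theorem proposition3p3:
  fixes C :: "('a::ring_1, 'c::ab_group_add) bimod"
    and M :: "('a, 'm::ab_group_add) bimod"
    and \<Delta> :: "'c \<Rightarrow> ('c \<times> 'c \<Rightarrow>\<^sub>0 int)"
    and \<epsilon> :: "'c \<Rightarrow> 'a"
    and mm :: "('c \<times> 'm \<Rightarrow>\<^sub>0 int) \<Rightarrow> ('m \<times> 'c \<Rightarrow>\<^sub>0 int)"
    and \<xi> :: "('c \<times> 'm \<Rightarrow>\<^sub>0 int) \<Rightarrow> 'c"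
    and \<delta> :: "('c \<times> 'm \<Rightarrow>\<^sub>0 int) \<Rightarrow> ('c \<times> ('m \<times> 'm \<Rightarrow>\<^sub>0 int) \<Rightarrow>\<^sub>0 int)"
  assumes "is_coring C \<Delta> \<epsilon>"
    and "is_cowreath C \<Delta> \<epsilon> M mm \<xi> \<delta>"
  shows "is_coring (tensor C M) (cw_comult \<Delta> mm \<delta>) (\<epsilon> \<circ> \<xi>)
    \<and> coring_morph (tensor C M) C \<xi> (cw_comult \<Delta> mm \<delta>) (\<epsilon> \<circ> \<xi>) \<Delta> \<epsilon>"
proof -
  interpret cowreath C M \<Delta> \<epsilon> mm \<xi> \<delta>
    using assms by unfold_locales
  show ?thesis
    using tensor_is_coring xi_coring_morph ..
qed

end
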